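(* If $p$ is an odd prime, then ${\rm Comp}(\mathbb{Z}_{p^2})=\{0,1,3\}$.
   Context: $\mathbb{Z}_n$ is the cyclic group of integers modulo $n$. A skew morphism of a finite group $G$ is a permutation $\varphi$ of $G$ fixing the identity such that for each $a\in G$ there is a non-negative integer $i_a$ with $\varphi(ab)=\varphi(a)\varphi^{i_a}(b)$ for all $b\in G$. ${\rm ord}(\varphi)$ is the order of $\langle\varphi\rangle$. If $\varphi$ is non-trivial, $\pi_\varphi(a)$ is the unique such $i_a\in\{1,\dots,{\rm ord}(\varphi)-1\}$; if $\varphi$ is the identity, $\pi_\varphi(a)=1$. Let $\sigma_\varphi(x,y)=\sum_{i=0}^{x-1}\pi_\varphi(\varphi^i(y))\in\mathbb{Z}_{{\rm ord}(\varphi)}$. The derived skew morphism $\varphi'$ of a skew morphism $\varphi$ of $\mathbb{Z}_n$ is the skew morphism of $\mathbb{Z}_{{\rm ord}(\varphi)}$ given by $\varphi'(a)=\sigma_\varphi(a,1)$. Set $\varphi^{(0)}=\varphi$, $\varphi^{(i+1)}=(\varphi^{(i)})'$. For $n\ge 2$ the complexity of $\varphi$ is the unique non-negative integer $c$ such that $\varphi^{(c)}$ is a skew morphism of a non-trivial cyclic group and $\varphi^{(c+1)}$ is a skew morphism of $\mathbb{Z}_1$. ${\rm Comp}(\mathbb{Z}_n)$ denotes the set of complexities of all skew morphisms of $\mathbb{Z}_n$. *)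

theory Defs
  imports Main "HOL-Computational_Algebra.Primes"
begin

text \<open>Z_n is represented by the residues {0..<n} (n \<ge> 1) with addition mod n;
  a map on Z_n is a function nat \<Rightarrow> nat, only its values on {0..<n} matter.\<close>

definition skew_morphism :: "nat \<Rightarrow> (nat \<Rightarrow> nat) \<Rightarrow> bool" where
  "skew_morphism n \<phi> \<longleftrightarrow> n \<ge> 1 \<and> bij_betw \<phi> {0..<n} {0..<n} \<and> \<phi> 0 = 0 \<and>
     (\<forall>a<n. \<exists>i::nat. \<forall>b<n. \<phi> ((a + b) mod n) = (\<phi> a + (\<phi> ^^ i) b) mod n)"

definition skew_ord :: "nat \<Rightarrow> (nat \<Rightarrow> nat) \<Rightarrow> nat" where
  "skew_ord n \<phi> = (LEAST k. k > 0 \<and> (\<forall>x<n. (\<phi> ^^ k) x = x))"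

definition is_identity_on :: "nat \<Rightarrow> (nat \<Rightarrow> nat) \<Rightarrow> bool" where
  "is_identity_on n \<phi> \<longleftrightarrow> (\<forall>x<n. \<phi> x = x)"

definition skew_pi :: "nat \<Rightarrow> (nat \<Rightarrow> nat) \<Rightarrow> nat \<Rightarrow> nat" where
  "skew_pi n \<phi> a = (if is_identity_on n \<phi> then 1 else
     (THE i. i \<in> {1..<skew_ord n \<phi>} \<and>
        (\<forall>b<n. \<phi> ((a + b) mod n) = (\<phi> a + (\<phi> ^^ i) b) mod n)))"

definition skew_sigma :: "nat \<Rightarrow> (nat \<Rightarrow> nat) \<Rightarrow> nat \<Rightarrow> nat \<Rightarrow> nat" where
  "skew_sigma n \<phi> x y = (\<Sum>i<x. skew_pi n \<phi> ((\<phi> ^^ i) y)) mod skew_ord n \<phi>"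

definition derived :: "nat \<Rightarrow> (nat \<Rightarrow> nat) \<Rightarrow> nat \<Rightarrow> nat" where
  "derived n \<phi> a = skew_sigma n \<phi> a (1 mod n)"

definition derive_step :: "nat \<times> (nat \<Rightarrow> nat) \<Rightarrow> nat \<times> (nat \<Rightarrow> nat)" where
  "derive_step nf = (skew_ord (fst nf) (snd nf), derived (fst nf) (snd nf))"

definition complexity :: "nat \<Rightarrow> (nat \<Rightarrow> nat) \<Rightarrow> nat" where
  "complexity n \<phi> = (THE c. fst ((derive_step ^^ c) (n, \<phi>)) \<ge> 2 \<and>
                            fst ((derive_step ^^ (c + 1)) (n, \<phi>)) = 1)"

definition Comp :: "nat \<Rightarrow> nat set" where
  "Comp n = {c. \<exists>\<phi>. skew_morphism n \<phi> \<and> complexity n \<phi> = c}"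

end

theory Submission
  imports Defs "HOL-Number_Theory.Pocklington"
begin

text \<open>
  A skew morphism of Z_n whose power function \<pi> is constantly 1 is an automorphism; its derived map
  is the identity of Z_ord(\<phi>), so its complexity is 0 or 1.

  Let \<phi> be a skew morphism of Z_p^2 that is not an automorphism. Its kernel {a. \<pi>(a) = 1} is a
  nontrivial subgroup without units, so it contains p, and \<phi> induces a skew morphism of Z_p, which
  is an automorphism x \<mapsto> u x. With k the order of u modulo p one finds \<pi>(x) \<equiv> 1 (mod k) and
  ord(\<phi>) = k p, and the function t(x) = (\<pi>(x) - 1)/k turns out to be linear modulo p:
  t(x) \<equiv> s x with 0 < s < p; moreover k \<ge> 2. Hence the derived map of \<phi> is
  a \<mapsto> a + k \<Sigma>_{i<a} (s u^i mod p) on Z_kp. Its order is p and its power function is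
  a \<mapsto> u^a mod p, so its own derived map is multiplication by u on Z_p, a non-identity
  automorphism. The derivation chain of \<phi> therefore has length 3.

  The identity, x \<mapsto> 2 x and x \<mapsto> x (p x + p - 1) realise the complexities 0, 1 and 3.
\<close>

lemma sum_lessThan_add:
  "(\<Sum>i<a + b. h i) = (\<Sum>i<a. h i) + (\<Sum>i<b. h (a + i))" for a b :: nat
  by (induction b) (auto simp: add.assoc)

lemma sum_lessThan_periodic:
  assumes "\<And>i. h (i + d) = (h i :: 'a::comm_semiring_1)"
  shows "(\<Sum>i<d * t. h i) = of_nat t * (\<Sum>i<d. h i)"
proof (induction t)
  case (Suc t)
  have shift: "h (d * t + i) = h i" for i
  proof (induction t)
    case (Suc t)
    then show ?case
      using assms[of "d * t + i"] by (simp add: ac_simps)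
  qed simp
  have "(\<Sum>i<d * Suc t. h i) = (\<Sum>i<d * t. h i) + (\<Sum>i<d. h (d * t + i))"
    by (metis sum_lessThan_add add.commute mult_Suc_right)
  also have "\<dots> = of_nat t * (\<Sum>i<d. h i) + (\<Sum>i<d. h i)"
    using Suc by (simp add: shift)
  finally show ?case
    by (simp add: algebra_simps)
qed simp

lemma one_plus_power_eq_nat: "(1 + c) ^ n = 1 + c * (\<Sum>i<n. (1 + c) ^ i)" for c n :: nat
  by (induction n) (simp_all add: algebra_simps)

lemma cong_power_prime_self:
  fixes a p :: nat
  assumes "prime p"
  shows "[a ^ p = a] (mod p)"
proof (cases "p dvd a")
  case True
  have "a dvd a ^ p"
    using prime_gt_0_nat[OF assms] by (simp add: dvd_power)
  then have "p dvd a ^ p"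
    using True by (rule dvd_trans[rotated])
  then show ?thesis
    using True by (simp add: cong_def dvd_eq_mod_eq_0)
next
  case False
  then have "[a * a ^ (p - 1) = a * 1] (mod p)"
    using fermat_theorem assms cong_scalar_left by blast
  then show ?thesis
    using assms by (simp add: power_eq_if[of a p] prime_gt_0_nat)
qed

lemma prime_dvd_geometric_sum:
  fixes u k p :: nat
  assumes "prime p" "[u ^ k = 1] (mod p)" "\<not> [u = 1] (mod p)"
  shows "p dvd (\<Sum>i<k. u ^ i)"
proof (cases "u = 0")
  case True
  then have "k = 0"
    using assms(2) prime_gt_1_nat[OF assms(1)] by (cases k) (auto simp: cong_def)
  then show ?thesis
    by simp
next
  case False
  then have "[1 + (u - 1) * (\<Sum>i<k. u ^ i) = 1 + 0] (mod p)"
    using one_plus_power_eq_nat[of "u - 1" k] assms(2) by simp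
  then have "p dvd (u - 1) * (\<Sum>i<k. u ^ i)"
    using cong_add_lcancel_nat cong_0_iff by blast
  moreover have "\<not> p dvd u - 1"
  proof
    assume "p dvd u - 1"
    then have "[u - 1 = 0] (mod p)"
      by (simp add: cong_0_iff)
    then have "[u - 1 + 1 = 0 + 1] (mod p)"
      by (rule cong_add) (rule cong_refl)
    then show False
      using assms(3) False by simp
  qed
  ultimately show ?thesis
    using assms(1) prime_dvd_mult_nat by blast
qed

lemma geometric_sum_prime_cong_1:
  fixes c p :: nat
  assumes "prime p" "\<not> p dvd c"
  shows "[(\<Sum>i<p. (1 + c) ^ i) = 1] (mod p)"
proof -
  have "[1 + c * (\<Sum>i<p. (1 + c) ^ i) = 1 + c] (mod p)"
    using cong_power_prime_self[OF assms(1), of "1 + c"] unfolding one_plus_power_eq_nat[of c p] .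
  then have "[c * (\<Sum>i<p. (1 + c) ^ i) = c] (mod p)"
    by (rule cong_add_lcancel_nat[THEN iffD1])
  then have "[c * (\<Sum>i<p. (1 + c) ^ i) = c * 1] (mod p)"
    by simp
  moreover have "coprime c p"
    using assms prime_imp_coprime_nat coprime_commute by blast
  ultimately show ?thesis
    using cong_mult_lcancel_nat by blast
qed

lemma ex_affine_fixed_point_cong:
  fixes c w p :: nat
  assumes "prime p" "\<not> p dvd w" "\<not> [w = 1] (mod p)"
  shows "\<exists>j. [c + j * w = j] (mod p)"
proof -
  have p: "2 \<le> p"
    using assms(1) prime_ge_2_nat by blast
  have "w mod p \<noteq> 0" "w mod p \<noteq> 1"
    using assms(2,3) p by (simp_all add: dvd_eq_mod_eq_0 cong_def)
  define \<delta> where "\<delta> = w mod p - 1"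
  have "0 < \<delta>" "\<delta> < p"
    using \<open>w mod p \<noteq> 0\<close> \<open>w mod p \<noteq> 1\<close> p unfolding \<delta>_def by (simp_all add: less_imp_diff_less)
  then have "\<not> p dvd \<delta>"
    by (auto dest: dvd_imp_le)
  then have "coprime \<delta> p"
    using assms(1) prime_imp_coprime_nat coprime_commute by blast
  then obtain j where j: "[\<delta> * j = p - c mod p] (mod p)"
    using cong_solve by blast
  have "[j * w = j * (w mod p)] (mod p)"
    by (simp add: cong_def mod_mult_right_eq)
  also have "j * (w mod p) = \<delta> * j + j"
    unfolding \<delta>_def using \<open>w mod p \<noteq> 0\<close> by (simp add: algebra_simps)
  also have "[\<delta> * j + j = (p - c mod p) + j] (mod p)"
    using j by (rule cong_add) (rule cong_refl)
  finally have "[c + j * w = c + (p - c mod p) + j] (mod p)"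
    by (simp add: cong_add_lcancel_nat add.assoc)
  also have "c + (p - c mod p) = p * (c div p) + p"
    using mod_less_divisor[of p c] mult_div_mod_eq[of p c] p by linarith
  also have "p * (c div p) + p + j = p * Suc (c div p) + j"
    by simp
  also have "[p * Suc (c div p) + j = j] (mod p)"
    unfolding cong_def by (rule mod_mult_self4)
  finally show ?thesis ..
qed

lemma funpow_add_apply: "(f ^^ (i + j)) x = (f ^^ i) ((f ^^ j) x)"
  by (simp add: funpow_add)

lemma mod_add_left_cancel_less:
  fixes c x y :: nat
  assumes "(c + x) mod n = (c + y) mod n" "x < n" "y < n"
  shows "x = y"
  using assms cong_add_lcancel_nat[of c x y n] by (simp add: cong_def)

lemma funpow_fixed_point_dvd:
  assumes "(f ^^ d) x = x" "(f ^^ a) x = x"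
    and "\<And>e. 0 < e \<Longrightarrow> e < d \<Longrightarrow> (f ^^ e) x \<noteq> x" "0 < d"
  shows "d dvd a"
proof -
  have "(f ^^ (a mod d)) x = x"
    using assms(1,2) by (simp add: funpow_mod_eq)
  then have "a mod d = 0"
    using assms(3)[of "a mod d"] assms(4) by (meson mod_less_divisor neq0_conv)
  then show ?thesis
    by (simp add: dvd_eq_mod_eq_0)
qed

section \<open>Complexity\<close>

lemma derived_0 [simp]: "Defs.derived n \<phi> 0 = 0"
  by (simp add: Defs.derived_def skew_sigma_def)

lemma skew_ord_identity: "is_identity_on n \<phi> \<Longrightarrow> skew_ord n \<phi> = 1"
  unfolding skew_ord_def is_identity_on_def by (intro Least_equality) auto

definition has_complexity :: "nat \<Rightarrow> (nat \<Rightarrow> nat) \<Rightarrow> nat \<Rightarrow> bool" where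
  "has_complexity n \<phi> c \<longleftrightarrow>
     (\<forall>i\<le>c. 2 \<le> fst ((derive_step ^^ i) (n, \<phi>))) \<and> fst ((derive_step ^^ Suc c) (n, \<phi>)) = 1"

lemma derive_step_funpow_trivial_group:
  assumes "fst ((derive_step ^^ c) X) = 1" "1 \<le> c" "c \<le> j"
  shows "fst ((derive_step ^^ j) X) = 1"
  using assms(3)
proof (induction j rule: dec_induct)
  case base
  show ?case using assms(1) .
next
  case (step m)
  obtain m' where m: "m = Suc m'"
    using step.hyps(1) assms(2) by (cases m) auto
  obtain \<psi> where Z: "(derive_step ^^ m) X = (1, \<psi>)"
    using step.IH by (metis prod.collapse)
  have "\<psi> 0 = 0"
    using Z unfolding m by (auto simp: derive_step_def)
  then have "fst (derive_step (1, \<psi>)) = 1"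
    by (simp add: derive_step_def skew_ord_identity is_identity_on_def)
  moreover have "(derive_step ^^ Suc m) X = derive_step (1, \<psi>)"
    using Z by simp
  ultimately show ?case
    by (simp only:)
qed

lemma complexity_eqI:
  assumes "has_complexity n \<phi> c"
  shows "complexity n \<phi> = c"
  unfolding complexity_def
proof (rule the_equality)
  show "2 \<le> fst ((derive_step ^^ c) (n, \<phi>)) \<and> fst ((derive_step ^^ (c + 1)) (n, \<phi>)) = 1"
    using assms by (simp add: has_complexity_def)
next
  fix c'
  assume c': "2 \<le> fst ((derive_step ^^ c') (n, \<phi>)) \<and> fst ((derive_step ^^ (c' + 1)) (n, \<phi>)) = 1"
  show "c' = c"
  proof (rule linorder_cases[of c' c])
    assume "c' < c"
    moreover have "\<forall>i\<le>c. 2 \<le> fst ((derive_step ^^ i) (n, \<phi>))"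
      using assms unfolding has_complexity_def by blast
    ultimately have "2 \<le> fst ((derive_step ^^ Suc c') (n, \<phi>))"
      using Suc_leI by blast
    then show ?thesis
      using c' by simp
  next
    assume "c < c'"
    have "fst ((derive_step ^^ Suc c) (n, \<phi>)) = 1"
      using assms unfolding has_complexity_def by blast
    then have "fst ((derive_step ^^ c') (n, \<phi>)) = 1"
      by (rule derive_step_funpow_trivial_group) (use \<open>c < c'\<close> in auto)
    then show ?thesis
      using c' by simp
  qed
qed

lemma has_complexity_in_Comp: "skew_morphism n \<phi> \<Longrightarrow> has_complexity n \<phi> c \<Longrightarrow> c \<in> Comp n"
  unfolding Comp_def using complexity_eqI by blast

lemma has_complexity_0:
  assumes "2 \<le> n" "is_identity_on n \<phi>"
  shows "has_complexity n \<phi> 0"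
  using assms by (simp add: has_complexity_def derive_step_def skew_ord_identity)

lemma has_complexity_Suc:
  assumes "2 \<le> n" "derive_step (n, \<phi>) = (n', \<phi>')" "has_complexity n' \<phi>' c"
  shows "has_complexity n \<phi> (Suc c)"
proof -
  have shift: "(derive_step ^^ Suc i) (n, \<phi>) = (derive_step ^^ i) (n', \<phi>')" for i
    using assms(2) by (simp only: funpow_Suc_right comp_apply)
  have "2 \<le> fst ((derive_step ^^ i) (n, \<phi>))" if "i \<le> Suc c" for i
  proof (cases i)
    case 0
    then show ?thesis using assms(1) by simp
  next
    case (Suc j)
    then show ?thesis
      using that assms(3) by (simp only: shift has_complexity_def)
  qed
  moreover have "fst ((derive_step ^^ Suc (Suc c)) (n, \<phi>)) = 1"
    using assms(3) by (simp only: shift has_complexity_def)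
  ultimately show ?thesis
    by (simp only: has_complexity_def) blast
qed

section \<open>Skew morphisms of cyclic groups\<close>

definition power_at :: "nat \<Rightarrow> (nat \<Rightarrow> nat) \<Rightarrow> nat \<Rightarrow> nat \<Rightarrow> bool" where
  "power_at n \<phi> a i \<longleftrightarrow> (\<forall>b<n. \<phi> ((a + b) mod n) = (\<phi> a + (\<phi> ^^ i) b) mod n)"

definition additive_at :: "nat \<Rightarrow> (nat \<Rightarrow> nat) \<Rightarrow> nat \<Rightarrow> bool" where
  "additive_at n \<phi> a \<longleftrightarrow> (\<forall>b<n. \<phi> ((a + b) mod n) = (\<phi> a + \<phi> b) mod n)"

lemma additive_at_iff_power_at_1: "additive_at n \<phi> a \<longleftrightarrow> power_at n \<phi> a 1"
  by (simp add: additive_at_def power_at_def)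

lemma skew_morphismI:
  assumes "1 \<le> n" "\<phi> 0 = 0" "inj_on \<phi> {0..<n}" "\<forall>x<n. \<phi> x < n"
    and "\<And>a. a < n \<Longrightarrow> \<exists>i. power_at n \<phi> a i"
  shows "skew_morphism n \<phi>"
proof -
  have "\<phi> ` {0..<n} = {0..<n}"
    using assms(3,4) by (intro endo_inj_surj) auto
  then show ?thesis
    using assms unfolding skew_morphism_def power_at_def bij_betw_def by blast
qed

locale skew_Zn =
  fixes n :: nat and \<phi> :: "nat \<Rightarrow> nat"
  assumes skew_morphism: "skew_morphism n \<phi>"
begin

abbreviation "M \<equiv> skew_ord n \<phi>"
abbreviation "\<pi> \<equiv> skew_pi n \<phi>"

lemma n_pos: "0 < n"
  using skew_morphism by (simp add: skew_morphism_def)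

lemma phi_0 [simp]: "\<phi> 0 = 0"
  using skew_morphism by (simp add: skew_morphism_def)

lemma ex_power_at: "a < n \<Longrightarrow> \<exists>i. power_at n \<phi> a i"
  using skew_morphism by (simp add: skew_morphism_def power_at_def)

lemma bij_betw_funpow_phi: "bij_betw (\<phi> ^^ i) {0..<n} {0..<n}"
  using skew_morphism by (simp add: skew_morphism_def bij_betw_funpow)

lemma funpow_less: "x < n \<Longrightarrow> (\<phi> ^^ i) x < n"
  using bij_betw_apply[OF bij_betw_funpow_phi] by simp

lemma funpow_inj: "x < n \<Longrightarrow> y < n \<Longrightarrow> (\<phi> ^^ i) x = (\<phi> ^^ i) y \<Longrightarrow> x = y"
  using bij_betw_funpow_phi[of i] by (simp add: bij_betw_def inj_on_def)

lemma phi_less: "x < n \<Longrightarrow> \<phi> x < n"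
  using funpow_less[of x 1] by simp

lemma phi_inj: "x < n \<Longrightarrow> y < n \<Longrightarrow> \<phi> x = \<phi> y \<Longrightarrow> x = y"
  using funpow_inj[of x y 1] by simp

lemma phi_surj:
  assumes "y < n"
  shows "\<exists>x<n. \<phi> x = y"
proof -
  have "y \<in> \<phi> ` {0..<n}"
    using skew_morphism assms by (simp add: skew_morphism_def bij_betw_def)
  then show ?thesis
    by auto
qed

lemma funpow_phi_0 [simp]: "(\<phi> ^^ i) 0 = 0"
  by (induction i) auto

lemma ex_period: "\<exists>j>0. \<forall>x<n. (\<phi> ^^ j) x = x"
proof -
  let ?F = "\<lambda>i. restrict (\<phi> ^^ i) {0..<n}"
  have "range ?F \<subseteq> {0..<n} \<rightarrow>\<^sub>E {0..<n}"
    using funpow_less by auto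
  then have "finite (range ?F)"
    by (rule finite_subset) (simp add: finite_PiE)
  then have "\<not> inj ?F"
    using finite_imageD infinite_UNIV_nat by blast
  then have "\<exists>i j. i < j \<and> ?F i = ?F j"
    unfolding inj_def by (metis linorder_neqE_nat)
  then obtain i j where ij: "i < j" "?F i = ?F j"
    by blast
  have "(\<phi> ^^ (j - i)) x = x" if "x < n" for x
  proof -
    have "(\<phi> ^^ i) ((\<phi> ^^ (j - i)) x) = (\<phi> ^^ j) x"
      using ij(1) by (simp flip: funpow_add_apply)
    also have "\<dots> = (\<phi> ^^ i) x"
      using fun_cong[OF ij(2), of x] that by simp
    finally show ?thesis
      using that funpow_inj funpow_less by blast
  qed
  then show ?thesis
    using ij(1) by (intro exI[of _ "j - i"]) auto
qed

lemma order_pos: "0 < M"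
  and funpow_order: "x < n \<Longrightarrow> (\<phi> ^^ M) x = x"
proof -
  have "0 < M \<and> (\<forall>x<n. (\<phi> ^^ M) x = x)"
    unfolding skew_ord_def by (rule LeastI_ex) (rule ex_period)
  then show "0 < M" "x < n \<Longrightarrow> (\<phi> ^^ M) x = x"
    by auto
qed

lemma funpow_less_order_not_id: "0 < j \<Longrightarrow> j < M \<Longrightarrow> \<exists>x<n. (\<phi> ^^ j) x \<noteq> x"
  unfolding skew_ord_def using not_less_Least by blast

lemma funpow_mod_order: "x < n \<Longrightarrow> (\<phi> ^^ (i mod M)) x = (\<phi> ^^ i) x"
  by (simp add: funpow_mod_eq funpow_order)

lemma order_dvd:
  assumes "\<forall>x<n. (\<phi> ^^ j) x = x"
  shows "M dvd j"
proof -
  have "\<forall>x<n. (\<phi> ^^ (j mod M)) x = x"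
    using assms by (simp add: funpow_mod_order)
  then have "\<not> 0 < j mod M"
    using funpow_less_order_not_id[of "j mod M"] order_pos by auto
  then show ?thesis
    by (simp add: dvd_eq_mod_eq_0)
qed

lemma funpow_eq_imp_mod_order_eq:
  assumes "\<forall>x<n. (\<phi> ^^ i) x = (\<phi> ^^ j) x"
  shows "i mod M = j mod M"
proof -
  have "i mod M = j mod M" if "i \<le> j" and eq: "\<forall>x<n. (\<phi> ^^ i) x = (\<phi> ^^ j) x" for i j
  proof -
    have "(\<phi> ^^ (j - i)) x = x" if "x < n" for x
    proof -
      have "(\<phi> ^^ i) ((\<phi> ^^ (j - i)) x) = (\<phi> ^^ j) x"
        using \<open>i \<le> j\<close> by (simp flip: funpow_add_apply)
      then show ?thesis
        using that eq funpow_inj funpow_less by metis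
    qed
    then have "M dvd j - i"
      by (simp add: order_dvd)
    then show ?thesis
      using mod_eq_dvd_iff_nat[OF \<open>i \<le> j\<close>, of M] by simp
  qed
  then show ?thesis
    using assms by (metis nat_le_linear)
qed

lemma power_at_mod_order: "power_at n \<phi> a i \<Longrightarrow> power_at n \<phi> a (i mod M)"
  by (simp add: power_at_def funpow_mod_order)

lemma power_at_unique_mod_order:
  assumes "power_at n \<phi> a i" "power_at n \<phi> a j"
  shows "i mod M = j mod M"
proof (rule funpow_eq_imp_mod_order_eq, intro allI impI)
  fix b
  assume "b < n"
  then have "(\<phi> a + (\<phi> ^^ i) b) mod n = (\<phi> a + (\<phi> ^^ j) b) mod n"
    using assms by (simp add: power_at_def)
  then show "(\<phi> ^^ i) b = (\<phi> ^^ j) b"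
    using \<open>b < n\<close> funpow_less mod_add_left_cancel_less by blast
qed

lemma identity_iff_order_1: "is_identity_on n \<phi> \<longleftrightarrow> M = 1"
proof
  assume "is_identity_on n \<phi>"
  then show "M = 1"
    by (rule skew_ord_identity)
next
  assume "M = 1"
  then show "is_identity_on n \<phi>"
    using funpow_order by (simp add: is_identity_on_def)
qed

lemma power_at_0_imp_identity:
  assumes "a < n" "power_at n \<phi> a 0"
  shows "is_identity_on n \<phi>"
proof -
  define c where "c = \<phi> a + (n - a)"
  have translation: "\<phi> x = (x + c) mod n" if "x < n" for x
  proof -
    have "(a + (x + (n - a)) mod n) mod n = x"
      using that assms(1) by (simp add: mod_add_right_eq)
    moreover have "\<phi> ((a + (x + (n - a)) mod n) mod n) = (\<phi> a + (x + (n - a)) mod n) mod n"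
      using assms(2) n_pos by (simp add: power_at_def)
    ultimately show ?thesis
      by (simp add: mod_add_right_eq c_def ac_simps)
  qed
  have "c mod n = 0"
    using translation[of 0] n_pos by simp
  then show ?thesis
    using translation by (simp add: is_identity_on_def flip: mod_add_right_eq[of _ c])
qed

lemma power_at_mod_order_neq_0:
  assumes "a < n" "\<not> is_identity_on n \<phi>" "power_at n \<phi> a i"
  shows "i mod M \<noteq> 0"
  using power_at_mod_order[OF assms(3)] power_at_0_imp_identity[OF assms(1)] assms(2) by metis

lemma skew_pi_eq_mod_order:
  assumes "a < n" "\<not> is_identity_on n \<phi>" "power_at n \<phi> a i"
  shows "\<pi> a = i mod M"
proof -
  have "i mod M \<noteq> 0"
    using power_at_mod_order_neq_0[OF assms] .
  then have range: "i mod M \<in> {1..<M}"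
    using order_pos by simp
  have "(THE j. j \<in> {1..<M} \<and> (\<forall>b<n. \<phi> ((a + b) mod n) = (\<phi> a + (\<phi> ^^ j) b) mod n)) = i mod M"
  proof (rule the_equality)
    show "i mod M \<in> {1..<M} \<and> (\<forall>b<n. \<phi> ((a + b) mod n) = (\<phi> a + (\<phi> ^^ (i mod M)) b) mod n)"
      using range power_at_mod_order[OF assms(3)] by (simp add: power_at_def)
  next
    fix j
    assume "j \<in> {1..<M} \<and> (\<forall>b<n. \<phi> ((a + b) mod n) = (\<phi> a + (\<phi> ^^ j) b) mod n)"
    then show "j = i mod M"
      using power_at_unique_mod_order[OF _ assms(3), of j] by (simp add: power_at_def)
  qed
  then show ?thesis
    using assms(2) by (simp add: skew_pi_def)
qed

lemma skew_pi_power_at: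
  assumes "a < n"
  shows "power_at n \<phi> a (\<pi> a)"
proof (cases "is_identity_on n \<phi>")
  case True
  then show ?thesis
    using assms n_pos by (simp add: skew_pi_def power_at_def is_identity_on_def)
next
  case False
  obtain i where "power_at n \<phi> a i"
    using ex_power_at assms by blast
  then show ?thesis
    using skew_pi_eq_mod_order[OF assms False] power_at_mod_order by simp
qed

lemma skew_pi_pos:
  assumes "a < n"
  shows "0 < \<pi> a"
proof (cases "is_identity_on n \<phi>")
  case True
  then show ?thesis
    by (simp add: skew_pi_def)
next
  case False
  obtain i where "power_at n \<phi> a i"
    using ex_power_at assms by blast
  then show ?thesis
    using skew_pi_eq_mod_order[OF assms False] power_at_mod_order_neq_0[OF assms False] by simp
qed

lemma skew_pi_less_order: "a < n \<Longrightarrow> \<not> is_identity_on n \<phi> \<Longrightarrow> \<pi> a < M"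
  using ex_power_at skew_pi_eq_mod_order order_pos by (metis mod_less_divisor)

lemma skew_pi_eq_1:
  assumes "a < n" "additive_at n \<phi> a"
  shows "\<pi> a = 1"
proof (cases "is_identity_on n \<phi>")
  case True
  then show ?thesis
    by (simp add: skew_pi_def)
next
  case False
  then have "M \<noteq> 1"
    using identity_iff_order_1 by simp
  then show ?thesis
    using skew_pi_eq_mod_order[OF assms(1) False] assms(2) order_pos
    by (simp add: additive_at_iff_power_at_1)
qed

lemma additive_at_if_skew_pi_eq_1: "a < n \<Longrightarrow> \<pi> a = 1 \<Longrightarrow> additive_at n \<phi> a"
  using skew_pi_power_at[of a] by (simp add: additive_at_iff_power_at_1)

lemma additive_at_0: "additive_at n \<phi> 0"
  using phi_less by (simp add: additive_at_def)

lemma skew_pi_0: "\<pi> 0 = 1"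
  using skew_pi_eq_1[OF n_pos additive_at_0] .

lemma funpow_skew_add:
  assumes "x < n" "y < n"
  shows "(\<phi> ^^ j) ((x + y) mod n) = ((\<phi> ^^ j) x + (\<phi> ^^ (\<Sum>i<j. \<pi> ((\<phi> ^^ i) x))) y) mod n"
proof (induction j)
  case (Suc j)
  define A where "A = (\<phi> ^^ j) x"
  define S where "S = (\<Sum>i<j. \<pi> ((\<phi> ^^ i) x))"
  have "A < n" "(\<phi> ^^ S) y < n"
    using funpow_less assms by (simp_all add: A_def)
  then have "\<phi> ((A + (\<phi> ^^ S) y) mod n) = (\<phi> A + (\<phi> ^^ (\<pi> A + S)) y) mod n"
    using skew_pi_power_at by (simp add: power_at_def funpow_add_apply)
  then show ?case
    using Suc by (simp add: A_def S_def add.commute)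
qed simp

lemma power_at_add:
  assumes "x < n" "y < n"
  shows "power_at n \<phi> ((x + y) mod n) (\<Sum>i<\<pi> x. \<pi> ((\<phi> ^^ i) y))"
  unfolding power_at_def
proof (intro allI impI)
  fix z
  assume "z < n"
  have "((x + y) mod n + z) mod n = (x + (y + z) mod n) mod n"
    by (simp add: mod_add_left_eq mod_add_right_eq add.assoc)
  moreover have "\<phi> ((x + (y + z) mod n) mod n) = (\<phi> x + (\<phi> ^^ \<pi> x) ((y + z) mod n)) mod n"
    using skew_pi_power_at[OF assms(1)] n_pos by (simp add: power_at_def)
  moreover have "\<phi> ((x + y) mod n) = (\<phi> x + (\<phi> ^^ \<pi> x) y) mod n"
    using skew_pi_power_at[OF assms(1)] assms(2) by (simp add: power_at_def)
  ultimately show "\<phi> (((x + y) mod n + z) mod n)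
      = (\<phi> ((x + y) mod n) + (\<phi> ^^ (\<Sum>i<\<pi> x. \<pi> ((\<phi> ^^ i) y))) z) mod n"
    using funpow_skew_add[OF assms(2) \<open>z < n\<close>, of "\<pi> x"]
    by (simp add: mod_add_left_eq mod_add_right_eq add.assoc)
qed

lemma orbit_sum_dvd:
  assumes "1 < n" "0 < d" "(\<phi> ^^ d) 1 = 1" "d dvd M"
  shows "d dvd (\<Sum>i<d. \<pi> ((\<phi> ^^ i) 1))"
proof -
  define c where "c = (\<Sum>i<d. \<pi> ((\<phi> ^^ i) 1))"
  obtain t where t: "M = d * t"
    using assms(4) by blast
  have "(\<Sum>i<M. \<pi> ((\<phi> ^^ i) 1)) = t * c"
    using sum_lessThan_periodic[of "\<lambda>i. \<pi> ((\<phi> ^^ i) 1)" d t] assms(3)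
    by (simp add: t c_def funpow_add_apply)
  then have "(1 + y) mod n = (1 + (\<phi> ^^ (t * c)) y) mod n" if "y < n" for y
    using funpow_skew_add[OF assms(1) that, of M] funpow_order assms(1) that n_pos by simp
  then have "\<forall>y<n. (\<phi> ^^ (t * c)) y = y"
    using funpow_less mod_add_left_cancel_less by metis
  then have "d * t dvd c * t"
    using order_dvd t by (simp add: mult.commute)
  then show ?thesis
    using order_pos t by (simp add: c_def)
qed

text \<open>With c = \<sigma>(d, 1) we have \<phi>^d(1 + y) = 1 + \<phi>^c(y); when d divides c, this passes the property
  of being fixed by \<phi>^d from y to 1 + y.\<close>

lemma funpow_identity_if_fixes_1:
  assumes "1 < n" "(\<phi> ^^ d) 1 = 1" "d dvd (\<Sum>i<d. \<pi> ((\<phi> ^^ i) 1))" "x < n"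
  shows "(\<phi> ^^ d) x = x"
  using assms(4)
proof (induction x)
  case (Suc x)
  then have "(\<phi> ^^ ((\<Sum>i<d. \<pi> ((\<phi> ^^ i) 1)) mod d)) x = (\<phi> ^^ (\<Sum>i<d. \<pi> ((\<phi> ^^ i) 1))) x"
    by (intro funpow_mod_eq) simp
  then have "(\<phi> ^^ (\<Sum>i<d. \<pi> ((\<phi> ^^ i) 1))) x = x"
    using assms(3) by simp
  then show ?case
    using funpow_skew_add[OF assms(1), of x d] Suc.prems assms(2) by simp
qed simp

lemma order_dvd_if_fixes_1:
  assumes "1 < n" "(\<phi> ^^ j) 1 = 1"
  shows "M dvd j"
proof -
  define d where "d = (LEAST d. 0 < d \<and> (\<phi> ^^ d) 1 = 1)"
  have "0 < d \<and> (\<phi> ^^ d) 1 = 1"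
    unfolding d_def by (rule LeastI[of _ M]) (use order_pos funpow_order assms(1) in auto)
  then have d: "0 < d" "(\<phi> ^^ d) 1 = 1"
    by auto
  have d_dvd: "d dvd a" if "(\<phi> ^^ a) 1 = 1" for a
    using d(2) that by (rule funpow_fixed_point_dvd) (use d(1) not_less_Least d_def in blast)+
  then have "d dvd M"
    using funpow_order assms(1) by blast
  then have "M dvd d"
    using funpow_identity_if_fixes_1[OF assms(1) d(2) orbit_sum_dvd[OF assms(1) d]] order_dvd by blast
  then show ?thesis
    using d_dvd[OF assms(2)] by (rule dvd_trans)
qed

lemma order_less:
  assumes "2 \<le> n"
  shows "M < n"
proof -
  have one: "1 < n"
    using assms by simp
  have "(\<phi> ^^ i) 1 \<noteq> 0" for i
    using funpow_inj[OF one n_pos, of i] by auto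
  then have "(\<lambda>i. (\<phi> ^^ i) 1) ` {0..<n} \<subseteq> {1..<n}"
    using funpow_less[OF one] by (auto simp: Suc_le_eq)
  then have "\<not> inj_on (\<lambda>i. (\<phi> ^^ i) 1) {0..<n}"
    using card_inj_on_le[of "\<lambda>i. (\<phi> ^^ i) 1" "{0..<n}" "{1..<n}"] one by auto
  then have "\<exists>i j. i < j \<and> j < n \<and> (\<phi> ^^ i) 1 = (\<phi> ^^ j) 1"
    unfolding inj_on_def by (metis atLeastLessThan_iff linorder_neqE_nat)
  then obtain i j where ij: "i < j" "j < n" "(\<phi> ^^ i) 1 = (\<phi> ^^ j) 1"
    by blast
  then have "(\<phi> ^^ i) ((\<phi> ^^ (j - i)) 1) = (\<phi> ^^ i) 1"
    by (simp flip: funpow_add_apply)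
  then have "(\<phi> ^^ (j - i)) 1 = 1"
    using funpow_inj funpow_less one by blast
  then have "M dvd j - i"
    using order_dvd_if_fixes_1 one by blast
  then have "M \<le> j - i"
    using ij(1) by (simp add: dvd_imp_le)
  then show ?thesis
    using ij(2) by linarith
qed

text \<open>Since a and b have the same power i, \<phi>(a + w) - \<phi>(b + w) = \<phi>(a) - \<phi>(b) for all w;
  compare w = y - b with w = -b.\<close>

lemma additive_at_diff:
  assumes "b < a" "a < n" "power_at n \<phi> a i" "power_at n \<phi> b i"
  shows "additive_at n \<phi> (a - b)"
  unfolding additive_at_def
proof (intro allI impI)
  fix y
  assume "y < n"
  define w where "w z = (z + (n - b)) mod n" for z
  have w: "w z < n" for z
    using n_pos by (simp add: w_def)
  have shift: "(c + w z) mod n = (c - b + z) mod n" if "b \<le> c" for c z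
  proof -
    have "(c + w z) mod n = (c + (z + (n - b))) mod n"
      by (simp only: w_def mod_add_right_eq)
    also have "c + (z + (n - b)) = (c - b + z) + n"
      using that assms(1,2) by linarith
    finally show ?thesis
      by simp
  qed
  have pa: "\<phi> ((a + w z) mod n) = (\<phi> a + (\<phi> ^^ i) (w z)) mod n" for z
    using assms(3) w by (simp add: power_at_def)
  have pb: "\<phi> ((b + w z) mod n) = (\<phi> b + (\<phi> ^^ i) (w z)) mod n" for z
    using assms(4) w by (simp add: power_at_def)
  have e1: "\<phi> ((a - b + y) mod n) = (\<phi> a + (\<phi> ^^ i) (w y)) mod n"
    using pa[of y] shift[of a y] assms(1) by simp
  have e2: "\<phi> y = (\<phi> b + (\<phi> ^^ i) (w y)) mod n"
    using pb[of y] shift[of b y] \<open>y < n\<close> by simp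
  have e3: "\<phi> (a - b) = (\<phi> a + (\<phi> ^^ i) (w 0)) mod n"
    using pa[of 0] shift[of a 0] assms(1,2) by simp
  have e4: "0 = (\<phi> b + (\<phi> ^^ i) (w 0)) mod n"
    using pb[of 0] shift[of b 0] by simp
  have "(\<phi> (a - b) + \<phi> y) mod n = ((\<phi> a + (\<phi> ^^ i) (w y)) + (\<phi> b + (\<phi> ^^ i) (w 0))) mod n"
    unfolding e2 e3 by (simp add: mod_add_eq ac_simps)
  also have "\<dots> = ((\<phi> a + (\<phi> ^^ i) (w y)) + (\<phi> b + (\<phi> ^^ i) (w 0)) mod n) mod n"
    by (simp add: mod_add_right_eq)
  also have "\<dots> = \<phi> ((a - b + y) mod n)"
    unfolding e1 by (simp flip: e4)
  finally show "\<phi> ((a - b + y) mod n) = (\<phi> (a - b) + \<phi> y) mod n"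
    by simp
qed

text \<open>Pigeonhole: \<pi> maps Z_n into {1..<M}, and M < n.\<close>

lemma ex_additive_at:
  assumes "2 \<le> n"
  shows "\<exists>d. 0 < d \<and> d < n \<and> additive_at n \<phi> d"
proof (cases "is_identity_on n \<phi>")
  case True
  then have "additive_at n \<phi> 1"
    using assms n_pos by (simp add: additive_at_def is_identity_on_def)
  then show ?thesis
    using assms by (intro exI[of _ 1]) auto
next
  case False
  have "\<pi> ` {0..<n} \<subseteq> {1..<M}"
    using skew_pi_pos skew_pi_less_order False by (auto simp: Suc_le_eq)
  then have "\<not> inj_on \<pi> {0..<n}"
    using card_inj_on_le[of \<pi> "{0..<n}" "{1..<M}"] order_less[OF assms] by auto
  then have "\<exists>a b. b < a \<and> a < n \<and> \<pi> a = \<pi> b"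
    unfolding inj_on_def by (metis atLeastLessThan_iff linorder_neqE_nat)
  then obtain a b where "b < a" "a < n" "\<pi> a = \<pi> b"
    by blast
  then have "additive_at n \<phi> (a - b)"
    using additive_at_diff skew_pi_power_at by (metis order.strict_trans)
  then show ?thesis
    using \<open>b < a\<close> \<open>a < n\<close> by (intro exI[of _ "a - b"]) auto
qed

lemma additive_at_add:
  assumes "additive_at n \<phi> d" "additive_at n \<phi> e" "d < n" "e < n"
  shows "additive_at n \<phi> ((d + e) mod n)"
  using power_at_add[OF assms(3,4)] skew_pi_eq_1[OF assms(3,1)] skew_pi_eq_1[OF assms(4,2)]
  by (simp add: additive_at_iff_power_at_1)

lemma additive_at_mult:
  assumes "additive_at n \<phi> d" "d < n"
  shows "additive_at n \<phi> ((j * d) mod n)"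
proof (induction j)
  case (Suc j)
  have "(Suc j * d) mod n = ((j * d) mod n + d) mod n"
    by (metis mod_add_left_eq add.commute mult_Suc)
  then show ?case
    using additive_at_add[OF Suc assms(1) _ assms(2)] n_pos by simp
qed (simp add: additive_at_0)

lemma phi_mult_of_additive_at:
  assumes "additive_at n \<phi> d" "d < n"
  shows "\<phi> ((j * d) mod n) = (j * \<phi> d) mod n"
proof (induction j)
  case (Suc j)
  have "\<phi> ((Suc j * d) mod n) = \<phi> (((j * d) mod n + d) mod n)"
    by (metis mod_add_left_eq add.commute mult_Suc)
  also have "\<dots> = (\<phi> ((j * d) mod n) + \<phi> d) mod n"
    using additive_at_mult[OF assms, of j] assms(2) by (simp add: additive_at_def)
  also have "\<dots> = (Suc j * \<phi> d) mod n"
    using Suc by (metis mod_add_left_eq add.commute mult_Suc)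
  finally show ?case .
qed simp

lemma additive_at_all_of_coprime:
  assumes "additive_at n \<phi> d" "d < n" "coprime d n" "x < n"
  shows "additive_at n \<phi> x"
proof -
  obtain j where "[d * j = x] (mod n)"
    using cong_solve[OF assms(3)] by blast
  then have "(j * d) mod n = x"
    using assms(4) by (simp add: cong_def mult.commute)
  then show ?thesis
    using additive_at_mult[OF assms(1,2), of j] by simp
qed

lemma phi_linear:
  assumes "1 < n" "\<forall>a<n. additive_at n \<phi> a" "x < n"
  shows "\<phi> x = (x * \<phi> 1) mod n"
  using phi_mult_of_additive_at[of 1 x] assms by simp

lemma derived_automorphism:
  assumes "1 < n" "\<forall>a<n. additive_at n \<phi> a"
  shows "Defs.derived n \<phi> = (\<lambda>a. a mod M)"
proof
  fix a
  have "(\<Sum>i<a. \<pi> ((\<phi> ^^ i) 1)) = (\<Sum>i<a. 1)"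
    using skew_pi_eq_1 assms funpow_less by (intro sum.cong) auto
  then show "Defs.derived n \<phi> a = a mod M"
    using assms(1) by (simp add: Defs.derived_def skew_sigma_def)
qed

lemma has_complexity_automorphism:
  assumes "2 \<le> n" "\<forall>a<n. additive_at n \<phi> a"
  shows "has_complexity n \<phi> (if is_identity_on n \<phi> then 0 else 1)"
proof (cases "is_identity_on n \<phi>")
  case True
  then show ?thesis
    using assms(1) by (simp add: has_complexity_0)
next
  case False
  then have "2 \<le> M"
    using identity_iff_order_1 order_pos by simp
  then have "has_complexity M (\<lambda>a. a mod M) 0"
    by (simp add: has_complexity_0 is_identity_on_def)
  moreover have "derive_step (n, \<phi>) = (M, \<lambda>a. a mod M)"
    using derived_automorphism assms by (simp add: derive_step_def)
  ultimately show ?thesis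
    using False has_complexity_Suc[OF assms(1)] by simp
qed

lemma skew_pi_add_additive:
  assumes "additive_at n \<phi> a" "a < n" "x < n"
  shows "\<pi> ((a + x) mod n) = \<pi> x"
proof (cases "is_identity_on n \<phi>")
  case True
  then show ?thesis
    by (simp add: skew_pi_def)
next
  case False
  have "power_at n \<phi> ((a + x) mod n) (\<pi> x)"
    using power_at_add[OF assms(2,3)] skew_pi_eq_1[OF assms(2,1)] by simp
  then show ?thesis
    using skew_pi_eq_mod_order[OF _ False] skew_pi_less_order[OF assms(3) False] n_pos by simp
qed

end

definition mult_map :: "nat \<Rightarrow> nat \<Rightarrow> nat \<Rightarrow> nat" where
  "mult_map n c x = (c * x) mod n"

lemma additive_at_mult_map: "additive_at n (mult_map n c) a"
  by (simp add: additive_at_def mult_map_def mod_mult_right_eq mod_add_eq distrib_left)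

lemma skew_morphism_mult_map:
  assumes "1 \<le> n" "coprime c n"
  shows "skew_morphism n (mult_map n c)"
proof (rule skew_morphismI)
  show "inj_on (mult_map n c) {0..<n}"
  proof (rule inj_onI)
    fix x y
    assume "x \<in> {0..<n}" "y \<in> {0..<n}" "mult_map n c x = mult_map n c y"
    then show "x = y"
      using cong_mult_lcancel_nat[OF assms(2)] by (simp add: mult_map_def cong_def)
  qed
  show "\<exists>i. power_at n (mult_map n c) a i" for a
    using additive_at_mult_map by (auto simp: additive_at_iff_power_at_1)
qed (use assms in \<open>simp_all add: mult_map_def\<close>)

lemma is_identity_on_mult_map_iff:
  assumes "2 \<le> n"
  shows "is_identity_on n (mult_map n c) \<longleftrightarrow> c mod n = 1"
proof
  assume "is_identity_on n (mult_map n c)"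
  then show "c mod n = 1"
    using assms by (auto simp: is_identity_on_def mult_map_def dest: spec[of _ 1])
next
  assume "c mod n = 1"
  then show "is_identity_on n (mult_map n c)"
    by (simp add: is_identity_on_def mult_map_def mod_mult_left_eq[of c, symmetric])
qed

lemma has_complexity_mult_map:
  assumes "2 \<le> n" "coprime c n"
  shows "has_complexity n (mult_map n c) (if c mod n = 1 then 0 else 1)"
proof -
  interpret skew_Zn n "mult_map n c"
    by unfold_locales (use skew_morphism_mult_map assms in auto)
  show ?thesis
    using has_complexity_automorphism[OF assms(1)] additive_at_mult_map is_identity_on_mult_map_iff[OF assms(1)]
    by simp
qed

section \<open>A model for the derived skew morphism\<close>

definition twisted_sum :: "nat \<Rightarrow> nat \<Rightarrow> nat \<Rightarrow> nat \<Rightarrow> nat" where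
  "twisted_sum p u s a = (\<Sum>i<a. (u ^ i * s) mod p)"

text \<open>The derived map of every skew morphism of Z_p^2 that is not an automorphism has this form,
  see derived_eq_model below.\<close>

definition model_skew :: "nat \<Rightarrow> nat \<Rightarrow> nat \<Rightarrow> nat \<Rightarrow> nat \<Rightarrow> nat" where
  "model_skew p k u s a = (a + k * twisted_sum p u s a) mod (k * p)"

locale model_skew_params =
  fixes p k u s :: nat
  assumes prime: "prime p" and coprime_u: "coprime u p" and k_def: "k = ord p u"
    and k_ge_2: "2 \<le> k" and s_pos: "0 < s" and s_less: "s < p"
begin

abbreviation "D \<equiv> twisted_sum p u s"
abbreviation "g \<equiv> model_skew p k u s"

lemma p_ge_2: "2 \<le> p"
  using prime prime_ge_2_nat by blast

lemma kp_gt_1: "1 < k * p"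
proof -
  have "2 * 2 \<le> k * p"
    using k_ge_2 p_ge_2 by (rule mult_le_mono)
  then show ?thesis
    by simp
qed

lemma coprime_s: "coprime s p"
proof -
  have "\<not> p dvd s"
    using s_pos s_less by (auto dest: dvd_imp_le)
  then show ?thesis
    using prime prime_imp_coprime_nat coprime_commute by blast
qed

lemma power_u_cong_iff: "[u ^ a = u ^ b] (mod p) \<longleftrightarrow> [a = b] (mod k)"
  using order_divides_expdiff[of p u] coprime_u k_def by (simp add: coprime_commute)

lemma u_not_cong_1: "\<not> [u = 1] (mod p)"
  using ord_eq_Suc_0_iff[of p u] k_def k_ge_2 by simp

lemma twisted_sum_add: "[D (a + b) = D a + u ^ a * D b] (mod p)"
proof -
  have "D (a + b) = D a + (\<Sum>i<b. (u ^ (a + i) * s) mod p)"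
    unfolding twisted_sum_def by (rule sum_lessThan_add)
  moreover have "[(\<Sum>i<b. (u ^ (a + i) * s) mod p) = (\<Sum>i<b. u ^ a * ((u ^ i * s) mod p))] (mod p)"
    by (rule cong_sum) (simp add: cong_def mod_mult_right_eq power_add mult.assoc)
  then have "[D a + (\<Sum>i<b. (u ^ (a + i) * s) mod p) = D a + u ^ a * D b] (mod p)"
    unfolding twisted_sum_def sum_distrib_left by (rule cong_add[OF cong_refl])
  ultimately show ?thesis
    by simp
qed

lemma twisted_sum_k: "[D k = 0] (mod p)"
proof -
  have "p dvd (\<Sum>i<k. u ^ i)"
    using prime_dvd_geometric_sum[OF prime _ u_not_cong_1] ord[of u p] k_def by simp
  then have "[(\<Sum>i<k. u ^ i) * s = 0] (mod p)"
    by (simp add: cong_0_iff)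
  moreover have "[D k = (\<Sum>i<k. u ^ i) * s] (mod p)"
    unfolding twisted_sum_def sum_distrib_right by (rule cong_sum) (simp add: cong_def)
  ultimately show ?thesis
    using cong_trans by blast
qed

lemma twisted_sum_cong:
  assumes "[a = b] (mod k)"
  shows "[D a = D b] (mod p)"
proof -
  have periodic: "[D (c + k * j) = D c] (mod p)" for c j
  proof (induction j)
    case (Suc j)
    have "[D (c + k * j + k) = D (c + k * j) + u ^ (c + k * j) * D k] (mod p)"
      by (rule twisted_sum_add)
    moreover have "[u ^ (c + k * j) * D k = u ^ (c + k * j) * 0] (mod p)"
      using twisted_sum_k by (rule cong_scalar_left)
    ultimately have "[D (c + k * j + k) = D (c + k * j)] (mod p)"
      by (metis add.right_neutral cong_add cong_refl cong_trans mult_0_right)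
    then show ?case
      using cong_trans[OF _ Suc.IH] by (simp add: ac_simps)
  qed simp
  show ?thesis
    using periodic[of "a mod k" "a div k"] periodic[of "b mod k" "b div k"] assms
    by (simp add: cong_def)
qed

lemma funpow_model: "b < k * p \<Longrightarrow> (g ^^ j) b = (b + j * k * D b) mod (k * p)"
proof (induction j)
  case (Suc j)
  define X where "X = (g ^^ j) b"
  have X: "X = (b + j * k * D b) mod (k * p)"
    using Suc X_def by simp
  have "X mod k = (b + (j * D b) * k) mod k"
    unfolding X by (simp add: mod_mod_cancel algebra_simps)
  then have "[X = b] (mod k)"
    by (simp add: cong_def)
  then have "[D X = D b] (mod p)"
    by (rule twisted_sum_cong)
  then have "(k * D X) mod (k * p) = (k * D b) mod (k * p)"
    by (simp add: cong_def mod_mult_mult1)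
  have "(g ^^ Suc j) b = g X"
    by (simp add: X_def)
  also have "\<dots> = (X + k * D X) mod (k * p)"
    by (rule model_skew_def)
  also have "\<dots> = (X + k * D b) mod (k * p)"
    using \<open>(k * D X) mod (k * p) = (k * D b) mod (k * p)\<close> by (metis mod_add_right_eq)
  also have "\<dots> = (b + Suc j * k * D b) mod (k * p)"
    unfolding X by (simp only: mod_add_left_eq) (simp add: algebra_simps)
  finally show ?case .
qed simp

lemma twisted_sum_1: "D 1 = s"
  using s_less by (simp add: twisted_sum_def)

lemma funpow_model_1: "(g ^^ j) 1 = (1 + j * k * s) mod (k * p)"
  using funpow_model[OF kp_gt_1] twisted_sum_1 by simp

lemma funpow_model_1_less: "(g ^^ j) 1 < k * p"
  unfolding funpow_model_1 by (rule mod_less_divisor) (use k_ge_2 p_ge_2 in simp)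

lemma funpow_model_1_cong:
  assumes "(g ^^ i) 1 = (g ^^ j) 1"
  shows "[i = j] (mod p)"
proof -
  have "[1 + i * k * s = 1 + j * k * s] (mod k * p)"
    using assms unfolding cong_def funpow_model_1 .
  then have "[i * k * s = j * k * s] (mod k * p)"
    by (rule cong_add_lcancel_nat[THEN iffD1])
  then have "(k * (i * s)) mod (k * p) = (k * (j * s)) mod (k * p)"
    by (simp add: cong_def ac_simps)
  then have "[i * s = j * s] (mod p)"
    using k_ge_2 by (simp add: cong_def mod_mult_mult1)
  then show ?thesis
    using cong_mult_rcancel_nat coprime_s by blast
qed

lemma funpow_model_1_neq:
  assumes "0 < y" "y < p"
  shows "(g ^^ y) 1 \<noteq> 1"
proof
  assume "(g ^^ y) 1 = 1"
  then have "[y = 0] (mod p)"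
    using funpow_model_1_cong[of y 0] by simp
  then show False
    using assms by (simp add: cong_def)
qed

lemma skew_ord_model: "skew_ord (k * p) g = p"
  unfolding skew_ord_def
proof (rule Least_equality)
  have "(g ^^ p) x = x" if "x < k * p" for x
  proof -
    have "(g ^^ p) x = (x + D x * (k * p)) mod (k * p)"
      using funpow_model[OF that, of p] by (simp add: ac_simps)
    then show ?thesis
      using that by simp
  qed
  then show "0 < p \<and> (\<forall>x<k * p. (g ^^ p) x = x)"
    using p_ge_2 by simp
next
  fix y
  assume "0 < y \<and> (\<forall>x<k * p. (g ^^ y) x = x)"
  then show "p \<le> y"
    using funpow_model_1_neq kp_gt_1 not_le by blast
qed

lemma model_not_identity: "\<not> is_identity_on (k * p) g"
proof
  assume "is_identity_on (k * p) g"
  then have "(g ^^ 1) 1 = 1"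
    using kp_gt_1 by (simp add: is_identity_on_def)
  then show False
    using funpow_model_1_neq[of 1] p_ge_2 by simp
qed

lemma power_at_model:
  assumes "a < k * p"
  shows "power_at (k * p) g a (u ^ a mod p)"
  unfolding power_at_def
proof (intro allI impI)
  fix b
  assume b: "b < k * p"
  let ?m = "k * p"
  let ?i = "u ^ a mod p"
  define E where "E = D a + ?i * D b"
  have "[D ((a + b) mod ?m) = D (a + b)] (mod p)"
    by (rule twisted_sum_cong) (simp add: cong_def mod_mod_cancel)
  moreover have "[D (a + b) = E] (mod p)"
  proof -
    have "[D a + u ^ a * D b = E] (mod p)"
      unfolding E_def by (rule cong_add[OF cong_refl]) (simp add: cong_def mod_mult_left_eq)
    then show ?thesis
      using twisted_sum_add cong_trans by blast
  qed
  ultimately have "(k * D ((a + b) mod ?m)) mod ?m = (k * E) mod ?m"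
    using cong_trans by (simp add: cong_def mod_mult_mult1)
  then have "g ((a + b) mod ?m) = ((a + b) mod ?m + (k * E) mod ?m) mod ?m"
    unfolding model_skew_def by (metis mod_add_right_eq)
  also have "\<dots> = (a + b + k * E) mod ?m"
    by (rule mod_add_eq)
  also have "\<dots> = (g a + (g ^^ ?i) b) mod ?m"
    unfolding funpow_model[OF b] model_skew_def E_def by (simp add: mod_add_eq algebra_simps)
  finally show "g ((a + b) mod ?m) = (g a + (g ^^ ?i) b) mod ?m" .
qed

lemma skew_pi_model:
  assumes "a < k * p"
  shows "skew_pi (k * p) g a = u ^ a mod p"
proof -
  let ?m = "k * p"
  let ?i = "u ^ a mod p"
  have "coprime (u ^ a) p"
    using coprime_u by simp
  then have "\<not> p dvd u ^ a"
    using coprime_common_divisor[of "u ^ a" p p] p_ge_2 by auto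
  then have i_range: "?i \<in> {1..<p}"
    using p_ge_2 by (simp add: dvd_eq_mod_eq_0 Suc_le_eq)
  have "(THE i. i \<in> {1..<skew_ord ?m g} \<and> (\<forall>b<?m. g ((a + b) mod ?m) = (g a + (g ^^ i) b) mod ?m)) = ?i"
  proof (rule the_equality)
    show "?i \<in> {1..<skew_ord ?m g} \<and> (\<forall>b<?m. g ((a + b) mod ?m) = (g a + (g ^^ ?i) b) mod ?m)"
      using i_range skew_ord_model power_at_model[OF assms] by (simp add: power_at_def)
  next
    fix i
    assume i: "i \<in> {1..<skew_ord ?m g} \<and> (\<forall>b<?m. g ((a + b) mod ?m) = (g a + (g ^^ i) b) mod ?m)"
    have "g ((a + 1) mod ?m) = (g a + (g ^^ i) 1) mod ?m"
      using i kp_gt_1 by blast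
    moreover have "g ((a + 1) mod ?m) = (g a + (g ^^ ?i) 1) mod ?m"
      using power_at_model[OF assms] kp_gt_1 unfolding power_at_def by blast
    ultimately have "(g ^^ i) 1 = (g ^^ ?i) 1"
      using mod_add_left_cancel_less funpow_model_1_less by metis
    then have "[i = ?i] (mod p)"
      by (rule funpow_model_1_cong)
    then show "i = ?i"
      using i skew_ord_model by (simp add: cong_def)
  qed
  then show ?thesis
    using model_not_identity by (simp add: skew_pi_def)
qed

lemma derived_model: "Defs.derived (k * p) g = mult_map p u"
proof
  fix a
  have "skew_pi (k * p) g ((g ^^ i) 1) = u mod p" for i
  proof -
    have "(g ^^ i) 1 mod k = (1 + (i * s) * k) mod k"
      unfolding funpow_model_1 by (simp add: mod_mod_cancel algebra_simps)
    also have "\<dots> = 1 mod k"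
      by (rule mod_mult_self1)
    finally have "[u ^ ((g ^^ i) 1) = u ^ 1] (mod p)"
      using power_u_cong_iff unfolding cong_def by blast
    then show ?thesis
      using skew_pi_model[OF funpow_model_1_less] by (simp add: cong_def)
  qed
  then show "Defs.derived (k * p) g a = mult_map p u a"
    using kp_gt_1 skew_ord_model
    by (simp add: Defs.derived_def skew_sigma_def mult_map_def mod_mult_right_eq mult.commute)
qed

lemma has_complexity_model: "has_complexity (k * p) g 2"
proof -
  have "u mod p \<noteq> 1"
    using u_not_cong_1 p_ge_2 by (simp add: cong_def)
  then have "has_complexity p (mult_map p u) 1"
    using has_complexity_mult_map[OF p_ge_2 coprime_u] by simp
  then show ?thesis
    using has_complexity_Suc[of "k * p" g p "mult_map p u" 1] kp_gt_1 skew_ord_model derived_model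
    by (simp add: derive_step_def numeral_2_eq_2)
qed

end

section \<open>Skew morphisms of Z_p^2 that are not automorphisms\<close>

locale skew_prime_square = skew_Zn +
  fixes p :: nat
  assumes n_eq_square: "n = p ^ 2" and prime: "prime p"
    and not_automorphism: "\<not> (\<forall>a<n. additive_at n \<phi> a)"
begin

lemma p_ge_2: "2 \<le> p"
  using prime prime_ge_2_nat by blast

lemma n_eq: "n = p * p"
  by (simp add: n_eq_square power2_eq_square)

lemma p_less_n: "p < n"
  using p_ge_2 n_eq by simp

lemma one_less_n: "1 < n"
  using p_ge_2 p_less_n by simp

lemma mod_n_mod_p: "(a mod n) mod p = a mod p"
  by (simp add: n_eq mod_mod_cancel)

lemma p_mult_mod_n: "(p * a) mod n = p * (a mod p)"
  unfolding n_eq by (rule mod_mult_mult1)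

lemma coprime_if_not_dvd: "\<not> p dvd a \<Longrightarrow> coprime a p"
  using prime prime_imp_coprime_nat coprime_commute by blast

lemma not_identity: "\<not> is_identity_on n \<phi>"
proof
  assume "is_identity_on n \<phi>"
  then have "\<forall>a<n. additive_at n \<phi> a"
    using n_pos by (simp add: additive_at_def is_identity_on_def)
  then show False
    using not_automorphism by blast
qed

text \<open>The kernel contains a non-zero element, which cannot be a unit; hence p lies in the kernel.\<close>

lemma additive_at_p: "additive_at n \<phi> p"
proof -
  obtain d where d: "0 < d" "d < n" "additive_at n \<phi> d"
    using ex_additive_at one_less_n by auto
  have "\<not> coprime d n"
    using additive_at_all_of_coprime[OF d(3) d(2)] not_automorphism by blast
  then have "p dvd d"
    using prime_imp_power_coprime[OF prime, of d 2] n_eq_square by blast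
  then obtain e where e: "d = p * e"
    by blast
  then have "0 < e" "e < p"
    using d n_eq by simp_all
  then have "\<not> p dvd e"
    by (auto dest: dvd_imp_le)
  then have "coprime e p"
    by (rule coprime_if_not_dvd)
  then obtain j where j: "[e * j = 1] (mod p)"
    using cong_solve_coprime_nat by auto
  have "(j * d) mod n = (p * (e * j)) mod n"
    using e by (simp add: ac_simps)
  also have "\<dots> = p * ((e * j) mod p)"
    by (rule p_mult_mod_n)
  also have "(e * j) mod p = 1"
    using j p_ge_2 by (simp add: cong_def)
  finally show ?thesis
    using additive_at_mult[OF d(3) d(2), of j] by simp
qed

lemma additive_at_mult_p: "additive_at n \<phi> ((j * p) mod n)"
  by (rule additive_at_mult[OF additive_at_p p_less_n])

lemma phi_mult_p: "\<phi> ((j * p) mod n) = (j * \<phi> p) mod n"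
  by (rule phi_mult_of_additive_at[OF additive_at_p p_less_n])

definition v where "v = \<phi> p div p"

lemma phi_p: "\<phi> p = p * v"
  and v_pos: "0 < v"
  and v_less: "v < p"
proof -
  have "\<phi> ((p * p) mod n) = (p * \<phi> p) mod n"
    by (rule phi_mult_p)
  then have "p * p dvd p * \<phi> p"
    using n_eq by (simp add: dvd_eq_mod_eq_0)
  then show phi_p: "\<phi> p = p * v"
    using p_ge_2 by (simp add: v_def)
  have "\<phi> p \<noteq> 0"
    using phi_inj[OF p_less_n n_pos] p_ge_2 by auto
  then show "0 < v"
    using phi_p by simp
  show "v < p"
    using phi_less[OF p_less_n] phi_p n_eq by simp
qed

lemma phi_add_mult_p:
  assumes "x < n"
  shows "\<phi> ((x + j * p) mod n) = (\<phi> x + j * v * p) mod n"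
proof -
  have "\<phi> ((x + j * p) mod n) = \<phi> (((j * p) mod n + x) mod n)"
    by (metis add.commute mod_add_right_eq)
  also have "\<dots> = (\<phi> ((j * p) mod n) + \<phi> x) mod n"
    using additive_at_mult_p assms by (simp add: additive_at_def)
  also have "\<dots> = ((j * \<phi> p) mod n + \<phi> x) mod n"
    by (simp only: phi_mult_p)
  also have "\<dots> = (\<phi> x + j * v * p) mod n"
    unfolding mod_add_left_eq phi_p by (simp add: ac_simps)
  finally show ?thesis .
qed

lemma phi_mod_p:
  assumes "x < n"
  shows "\<phi> x mod p = \<phi> (x mod p) mod p"
proof -
  have "x mod p < p"
    using p_ge_2 by simp
  then have "x mod p < n"
    using p_less_n by linarith
  then have "\<phi> ((x mod p + (x div p) * p) mod n) = (\<phi> (x mod p) + (x div p) * v * p) mod n"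
    by (rule phi_add_mult_p)
  then have "\<phi> x mod p = (\<phi> (x mod p) + (x div p * v) * p) mod p"
    using assms by (simp add: mod_n_mod_p)
  then show ?thesis
    by simp
qed

text \<open>As p lies in the kernel, \<phi> induces a skew morphism of the quotient Z_p.\<close>

definition phi_bar where "phi_bar r = \<phi> r mod p"

lemma funpow_phi_bar:
  assumes "r < p"
  shows "(phi_bar ^^ i) r = (\<phi> ^^ i) r mod p"
proof (induction i)
  case (Suc i)
  have "r < n"
    using assms p_less_n by simp
  then show ?case
    using Suc phi_mod_p[OF funpow_less] by (simp add: phi_bar_def)
qed (use assms in simp)

lemma phi_bar_image: "phi_bar ` {0..<p} = {0..<p}"
proof
  show "phi_bar ` {0..<p} \<subseteq> {0..<p}"
    using p_ge_2 by (auto simp: phi_bar_def)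
  show "{0..<p} \<subseteq> phi_bar ` {0..<p}"
  proof
    fix r
    assume "r \<in> {0..<p}"
    then have "r < n"
      using p_less_n by simp
    then obtain x where x: "x < n" "\<phi> x = r"
      using phi_surj by blast
    then have "phi_bar (x mod p) = r"
      using phi_mod_p[OF x(1)] \<open>r \<in> {0..<p}\<close> by (simp add: phi_bar_def)
    then show "r \<in> phi_bar ` {0..<p}"
      using p_ge_2 by force
  qed
qed

lemma power_at_phi_bar:
  assumes "a < p"
  shows "power_at p phi_bar a (\<pi> a)"
  unfolding power_at_def
proof (intro allI impI)
  fix b
  assume "b < p"
  have "a + b < p + p"
    using assms \<open>b < p\<close> by simp
  also have "p + p \<le> p * p"
    using p_ge_2 by (simp add: mult_2[symmetric] mult_le_mono)
  finally have "a + b < n"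
    using n_eq by simp
  have "a < n" "b < n"
    using assms \<open>b < p\<close> p_less_n by simp_all
  have "phi_bar ((a + b) mod p) = \<phi> ((a + b) mod n) mod p"
    using phi_mod_p[OF \<open>a + b < n\<close>] \<open>a + b < n\<close> by (simp add: phi_bar_def)
  also have "\<phi> ((a + b) mod n) = (\<phi> a + (\<phi> ^^ \<pi> a) b) mod n"
    using skew_pi_power_at[OF \<open>a < n\<close>] \<open>b < n\<close> unfolding power_at_def by blast
  also have "\<dots> mod p = (phi_bar a + (phi_bar ^^ \<pi> a) b) mod p"
    using funpow_phi_bar[OF \<open>b < p\<close>] by (simp add: phi_bar_def mod_n_mod_p mod_add_eq)
  finally show "phi_bar ((a + b) mod p) = (phi_bar a + (phi_bar ^^ \<pi> a) b) mod p" .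
qed

lemma skew_morphism_phi_bar: "skew_morphism p phi_bar"
proof (rule skew_morphismI)
  show "inj_on phi_bar {0..<p}"
    using phi_bar_image by (simp add: eq_card_imp_inj_on)
  show "\<exists>i. power_at p phi_bar a i" if "a < p" for a
    using power_at_phi_bar[OF that] by blast
qed (use p_ge_2 in \<open>simp_all add: phi_bar_def\<close>)

text \<open>The kernel of phi_bar contains a unit, so phi_bar is an automorphism.\<close>

lemma phi_bar_linear: "x < p \<Longrightarrow> phi_bar x = (x * phi_bar 1) mod p"
proof -
  assume "x < p"
  interpret reduction: skew_Zn p phi_bar
    by unfold_locales (rule skew_morphism_phi_bar)
  obtain d where d: "0 < d" "d < p" "additive_at p phi_bar d"
    using reduction.ex_additive_at p_ge_2 by blast
  then have "\<not> p dvd d"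
    by (auto dest: dvd_imp_le)
  then have "\<forall>a<p. additive_at p phi_bar a"
    using reduction.additive_at_all_of_coprime[OF d(3) d(2) coprime_if_not_dvd] by blast
  moreover have "1 < p"
    using p_ge_2 by simp
  ultimately show ?thesis
    using reduction.phi_linear \<open>x < p\<close> by blast
qed

definition u where "u = \<phi> 1 mod p"

lemma phi_mod_p_eq:
  assumes "x < n"
  shows "\<phi> x mod p = (x * u) mod p"
proof -
  have "\<phi> x mod p = phi_bar (x mod p)"
    using phi_mod_p[OF assms] by (simp add: phi_bar_def)
  also have "\<dots> = ((x mod p) * phi_bar 1) mod p"
    by (rule phi_bar_linear) (use p_ge_2 in simp)
  also have "phi_bar 1 = u"
    by (simp add: phi_bar_def u_def)
  finally show ?thesis
    by (simp add: mod_mult_left_eq)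
qed

lemma coprime_u: "coprime u p"
proof -
  have "inj_on phi_bar {0..<p}"
    using skew_morphism_phi_bar by (simp add: skew_morphism_def bij_betw_def)
  then have "phi_bar 1 \<noteq> phi_bar 0"
    using inj_onD[of phi_bar "{0..<p}" 1 0] p_ge_2 by auto
  then have "u \<noteq> 0"
    by (simp add: u_def phi_bar_def)
  moreover have "u < p"
    using p_ge_2 by (simp add: u_def)
  ultimately have "\<not> p dvd u"
    by (auto dest: dvd_imp_le)
  then show ?thesis
    by (rule coprime_if_not_dvd)
qed

lemma funpow_mod_p: "x < n \<Longrightarrow> (\<phi> ^^ i) x mod p = (u ^ i * x) mod p"
proof (induction i)
  case (Suc i)
  have "(\<phi> ^^ Suc i) x mod p = ((\<phi> ^^ i) x * u) mod p"
    using phi_mod_p_eq[OF funpow_less[OF Suc.prems]] by simp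
  also have "\<dots> = (((\<phi> ^^ i) x mod p) * u) mod p"
    by (simp add: mod_mult_left_eq)
  also have "\<dots> = ((u ^ i * x) mod p * u) mod p"
    using Suc by simp
  also have "\<dots> = (u ^ Suc i * x) mod p"
    unfolding mod_mult_left_eq by (simp add: ac_simps)
  finally show ?case .
qed simp

definition k where "k = ord p u"

lemma k_pos: "0 < k"
  using coprime_u by (simp add: k_def coprime_commute)

lemma power_u_k: "[u ^ k = 1] (mod p)"
  unfolding k_def by (rule ord)

lemma power_u_cong_iff: "[u ^ a = u ^ b] (mod p) \<longleftrightarrow> [a = b] (mod k)"
  using order_divides_expdiff coprime_u k_def by (simp add: coprime_commute)

text \<open>Reducing \<phi>(x + 1) = \<phi>(x) + \<phi>^\<pi>(x)(1) modulo p gives u \<equiv> u^\<pi>(x).\<close>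

lemma skew_pi_cong_1:
  assumes "x < n"
  shows "[\<pi> x = 1] (mod k)"
proof -
  have x1: "(x + 1) mod n < n"
    using n_pos by simp
  have "\<phi> ((x + 1) mod n) mod p = (((x + 1) mod n) * u) mod p"
    by (rule phi_mod_p_eq[OF x1])
  also have "\<dots> = ((((x + 1) mod n) mod p) * u) mod p"
    by (rule mod_mult_left_eq[symmetric])
  also have "\<dots> = ((x + 1) * u) mod p"
    by (simp only: mod_n_mod_p mod_mult_left_eq)
  finally have "[(x + 1) * u = \<phi> ((x + 1) mod n)] (mod p)"
    by (simp add: cong_def)
  also have "\<phi> ((x + 1) mod n) = (\<phi> x + (\<phi> ^^ \<pi> x) 1) mod n"
    using skew_pi_power_at[OF assms] one_less_n unfolding power_at_def by blast
  also have "[\<dots> = \<phi> x + (\<phi> ^^ \<pi> x) 1] (mod p)"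
    by (simp add: cong_def mod_n_mod_p)
  also have "[\<phi> x + (\<phi> ^^ \<pi> x) 1 = x * u + u ^ \<pi> x] (mod p)"
    using phi_mod_p_eq[OF assms] funpow_mod_p[OF one_less_n, of "\<pi> x"]
    by (intro cong_add) (simp_all add: cong_def)
  finally have "[x * u + u ^ 1 = x * u + u ^ \<pi> x] (mod p)"
    by (simp add: algebra_simps)
  then have "[u ^ 1 = u ^ \<pi> x] (mod p)"
    by (rule cong_add_lcancel_nat[THEN iffD1])
  then show ?thesis
    using power_u_cong_iff cong_sym by blast
qed

lemma k_dvd_order: "k dvd M"
proof -
  have "(u ^ M * 1) mod p = 1 mod p"
    using funpow_mod_p[OF one_less_n, of M] funpow_order[OF one_less_n] by simp
  then show ?thesis
    using ord_divides k_def by (simp add: cong_def)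
qed

abbreviation "\<psi> \<equiv> \<phi> ^^ k"

lemma psi_mod_p:
  assumes "x < n"
  shows "\<psi> x mod p = x mod p"
proof -
  have "\<psi> x mod p = ((u ^ k mod p) * x) mod p"
    using funpow_mod_p[OF assms] by (simp add: mod_mult_left_eq)
  also have "u ^ k mod p = 1"
    using power_u_k p_ge_2 by (simp add: cong_def)
  finally show ?thesis
    by simp
qed

lemma psi_add:
  assumes "x < n" "y < n"
  shows "\<exists>e. \<psi> ((x + y) mod n) = (\<psi> x + (\<psi> ^^ e) y) mod n"
proof -
  have "[(\<Sum>i<k. \<pi> ((\<phi> ^^ i) x)) = (\<Sum>i<k. 1)] (mod k)"
    using skew_pi_cong_1 funpow_less assms(1) by (intro cong_sum) blast
  then have "k dvd (\<Sum>i<k. \<pi> ((\<phi> ^^ i) x))"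
    by (simp add: cong_def dvd_eq_mod_eq_0)
  then obtain e where "(\<Sum>i<k. \<pi> ((\<phi> ^^ i) x)) = k * e"
    by blast
  then have "\<psi> ((x + y) mod n) = (\<psi> x + (\<phi> ^^ (k * e)) y) mod n"
    using funpow_skew_add[OF assms, of k] by simp
  then show ?thesis
    by (auto simp: funpow_mult)
qed

text \<open>Since \<psi> acts additively up to powers of itself, a fixed unit generates a group of fixed points.\<close>

lemma psi_identity_if_fixes_unit:
  assumes "a < n" "coprime a p" "\<psi> a = a"
  shows "\<forall>x<n. \<psi> x = x"
proof (intro allI impI)
  fix x
  assume "x < n"
  have fixed: "(\<psi> ^^ e) a = a" for e
    by (induction e) (simp_all add: assms(3))
  have step: "\<psi> ((y + a) mod n) = (\<psi> y + a) mod n" if "y < n" for y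
    using psi_add[OF that assms(1)] fixed by auto
  have multiple: "\<psi> ((j * a) mod n) = (j * a) mod n" for j
  proof (induction j)
    case (Suc j)
    have "(Suc j * a) mod n = ((j * a) mod n + a) mod n"
      by (metis mod_add_left_eq add.commute mult_Suc)
    then show ?case
      using step[of "(j * a) mod n"] Suc n_pos by (simp add: mod_add_left_eq)
  qed simp
  have "coprime a n"
    using assms(2) n_eq_square by simp
  then obtain j where "[a * j = x] (mod n)"
    using cong_solve by blast
  then have "(j * a) mod n = x"
    using \<open>x < n\<close> by (simp add: cong_def mult.commute)
  then show "\<psi> x = x"
    using multiple[of j] by simp
qed

lemma funpow_add_mult_p:
  assumes "x < n"
  shows "(\<phi> ^^ i) ((x + j * p) mod n) = ((\<phi> ^^ i) x + j * v ^ i * p) mod n"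
proof (induction i)
  case (Suc i)
  have "(\<phi> ^^ Suc i) ((x + j * p) mod n) = \<phi> (((\<phi> ^^ i) x + (j * v ^ i) * p) mod n)"
    using Suc by (simp add: mult.assoc)
  also have "\<dots> = (\<phi> ((\<phi> ^^ i) x) + (j * v ^ i) * v * p) mod n"
    by (rule phi_add_mult_p[OF funpow_less[OF assms]])
  also have "(j * v ^ i) * v * p = j * v ^ Suc i * p"
    by (simp add: algebra_simps)
  finally show ?case
    by simp
qed (use assms in simp)

definition w where "w = v ^ k"

lemma psi_add_mult_p_w:
  assumes "x < n"
  shows "\<psi> ((x + j * p) mod n) = (\<psi> x + j * w * p) mod n"
  using funpow_add_mult_p[OF assms] by (simp add: w_def)

definition c where "c = \<psi> 1 div p"

lemma psi_1: "\<psi> 1 = 1 + c * p"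
  and c_less: "c < p"
proof -
  have "\<psi> 1 mod p = 1"
    using psi_mod_p[OF one_less_n] p_ge_2 by simp
  then show "\<psi> 1 = 1 + c * p"
    unfolding c_def by (metis mod_div_mult_eq)
  have "\<psi> 1 < p * p"
    using funpow_less[OF one_less_n] n_eq by simp
  then show "c < p"
    unfolding c_def using p_ge_2 by (simp add: div_less_iff_less_mult)
qed

text \<open>If w \<noteq> 1 (mod p), then \<psi> fixes the unit 1 + j p for a suitable j, so \<psi> is the identity,
  contradicting \<psi>(p) = w p.\<close>

lemma w_cong_1: "[w = 1] (mod p)"
proof (rule ccontr)
  assume "\<not> [w = 1] (mod p)"
  moreover have "\<not> p dvd v"
    using v_pos v_less by (auto dest: dvd_imp_le)
  then have "\<not> p dvd w"
    unfolding w_def using prime prime_dvd_power by blast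
  ultimately obtain j where j: "[c + j * w = j] (mod p)"
    using ex_affine_fixed_point_cong[OF prime] by blast
  define a where "a = (1 + j * p) mod n"
  have "a < n"
    unfolding a_def using n_pos by simp
  have "\<psi> a = (1 + ((c + j * w) * p) mod n) mod n"
    unfolding a_def psi_add_mult_p_w[OF one_less_n] psi_1 mod_add_right_eq by (simp add: algebra_simps)
  also have "((c + j * w) * p) mod n = (j * p) mod n"
    using j p_mult_mod_n[of "c + j * w"] p_mult_mod_n[of j] by (simp add: cong_def mult.commute)
  also have "(1 + (j * p) mod n) mod n = a"
    unfolding a_def by (rule mod_add_right_eq)
  finally have "\<psi> a = a" .
  have "a mod p = (1 + j * p) mod p"
    unfolding a_def by (rule mod_n_mod_p)
  also have "\<dots> = 1 mod p"
    by (rule mod_mult_self1)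
  also have "\<dots> = 1"
    using p_ge_2 by simp
  finally have "\<not> p dvd a"
    using p_ge_2 by (auto simp: dvd_eq_mod_eq_0)
  then have "\<forall>x<n. \<psi> x = x"
    using psi_identity_if_fixes_unit[OF \<open>a < n\<close> coprime_if_not_dvd \<open>\<psi> a = a\<close>] by blast
  then have "p * 1 = p * (w mod p)"
    using psi_add_mult_p_w[OF n_pos, of 1] p_less_n p_mult_mod_n[of w] by (simp add: mult.commute)
  then show False
    using \<open>\<not> [w = 1] (mod p)\<close> p_ge_2 by (simp add: cong_def)
qed

lemma psi_add_mult_p:
  assumes "x < n"
  shows "\<psi> ((x + j * p) mod n) = (\<psi> x + j * p) mod n"
proof -
  have "(p * (j * w)) mod n = (p * j) mod n"
    using w_cong_1 cong_scalar_left[OF w_cong_1, of j] by (simp add: p_mult_mod_n cong_def)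
  then show ?thesis
    unfolding psi_add_mult_p_w[OF assms]
    by (metis mod_add_right_eq mult.commute mult.left_commute)
qed

lemma c_pos: "0 < c"
proof (rule ccontr)
  assume "\<not> 0 < c"
  then have "\<psi> 1 = 1"
    using psi_1 by simp
  then have "\<forall>x<n. \<psi> x = x"
    using psi_identity_if_fixes_unit[OF one_less_n] by simp
  then have "M \<le> k"
    using order_dvd k_pos by (simp add: dvd_imp_le)
  have "additive_at n \<phi> x" if "x < n" for x
  proof -
    have "0 < \<pi> x" "\<pi> x < k"
      using skew_pi_pos skew_pi_less_order not_identity that \<open>M \<le> k\<close> by (auto intro: less_le_trans)
    moreover have "[\<pi> x = 1] (mod k)"
      using skew_pi_cong_1[OF that] .
    ultimately have "\<pi> x = 1"
      by (simp add: cong_def)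
    then show ?thesis
      using additive_at_if_skew_pi_eq_1 that by blast
  qed
  then show False
    using not_automorphism by blast
qed

lemma funpow_psi_1: "(\<psi> ^^ i) 1 = (1 + i * c * p) mod n"
proof (induction i)
  case (Suc i)
  have "(\<psi> ^^ Suc i) 1 = \<psi> ((1 + (i * c) * p) mod n)"
    using Suc by (simp add: mult.assoc)
  also have "\<dots> = (\<psi> 1 + (i * c) * p) mod n"
    by (rule psi_add_mult_p[OF one_less_n])
  also have "\<psi> 1 + (i * c) * p = 1 + Suc i * c * p"
    using psi_1 by (simp add: algebra_simps)
  finally show ?case .
qed (use one_less_n in simp)

lemma funpow_psi_p:
  assumes "x < n"
  shows "(\<psi> ^^ p) x = x"
proof -
  have le: "x \<le> \<psi> x + n"
    using assms by simp
  have "(\<psi> x + n) mod p = \<psi> x mod p"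
    unfolding n_eq by (rule mod_mult_self2)
  also have "\<dots> = x mod p"
    by (rule psi_mod_p[OF assms])
  finally have "p dvd \<psi> x + n - x"
    using mod_eq_dvd_iff_nat[OF le] by simp
  then obtain d where "\<psi> x + n - x = p * d"
    by blast
  then have "x + d * p = \<psi> x + n"
    using le by (simp add: algebra_simps)
  then have psi_x: "\<psi> x = (x + d * p) mod n"
    using funpow_less[OF assms] by simp
  have powers: "(\<psi> ^^ i) x = (x + i * d * p) mod n" for i
  proof (induction i)
    case (Suc i)
    have "(\<psi> ^^ Suc i) x = \<psi> ((x + (i * d) * p) mod n)"
      using Suc by (simp add: mult.assoc)
    also have "\<dots> = ((x + d * p) mod n + (i * d) * p) mod n"
      using psi_add_mult_p[OF assms] psi_x by simp
    also have "\<dots> = (x + Suc i * d * p) mod n"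
      unfolding mod_add_left_eq by (simp add: algebra_simps)
    finally show ?case .
  qed (use assms in simp)
  have "(\<psi> ^^ p) x = (x + d * n) mod n"
    unfolding powers n_eq by (simp add: algebra_simps)
  then show ?thesis
    using assms by simp
qed

lemma order_eq: "M = k * p"
proof (rule dvd_antisym)
  show "M dvd k * p"
    using funpow_psi_p by (intro order_dvd) (simp add: funpow_mult)
next
  obtain q where q: "M = k * q"
    using k_dvd_order by blast
  have "(\<psi> ^^ q) 1 = 1"
    using funpow_order[OF one_less_n] q by (simp add: funpow_mult)
  then have "(1 + q * c * p) mod n = 1 mod n"
    using one_less_n by (simp only: funpow_psi_1) simp
  then have "[1 + q * c * p = 1 + 0] (mod n)"
    by (simp add: cong_def)
  then have "[q * c * p = 0] (mod n)"
    by (rule cong_add_lcancel_nat[THEN iffD1])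
  then have "p * p dvd p * (q * c)"
    using n_eq by (simp add: cong_0_iff ac_simps)
  then have "p dvd q * c"
    using p_ge_2 by simp
  moreover have "\<not> p dvd c"
    using c_pos c_less by (auto dest: dvd_imp_le)
  ultimately have "p dvd q"
    using prime prime_dvd_mult_nat by blast
  then show "k * p dvd M"
    using q by simp
qed

definition t where "t x = (\<pi> x - 1) div k"

lemma skew_pi_eq_t: "x < n \<Longrightarrow> \<pi> x = 1 + k * t x"
  and t_less: "x < n \<Longrightarrow> t x < p"
proof -
  assume "x < n"
  then have "0 < \<pi> x" "\<pi> x < k * p"
    using skew_pi_pos skew_pi_less_order not_identity order_eq by auto
  moreover have "k dvd \<pi> x - 1"
    using skew_pi_cong_1[OF \<open>x < n\<close>] \<open>0 < \<pi> x\<close> mod_eq_dvd_iff_nat[of 1 "\<pi> x" k]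
    by (simp add: cong_def)
  then have "\<pi> x - 1 = k * t x"
    by (simp add: t_def)
  ultimately show "\<pi> x = 1 + k * t x"
    by simp
  have "k * t x < k * p"
    using \<open>\<pi> x - 1 = k * t x\<close> \<open>\<pi> x < k * p\<close> by linarith
  then show "t x < p"
    by simp
qed

lemma t_mod_p:
  assumes "x < n"
  shows "t x = t (x mod p)"
proof -
  define a where "a = x div p * p"
  have "a < n"
    using div_times_less_eq_dividend[of x p] assms unfolding a_def by linarith
  then have "additive_at n \<phi> a"
    using additive_at_mult_p[of "x div p"] by (simp add: a_def)
  moreover have "x mod p < n"
    using p_less_n p_ge_2 by (simp add: less_trans[OF mod_less_divisor])
  moreover have "(a + x mod p) mod n = x"
    using assms by (simp add: a_def)
  ultimately have "\<pi> x = \<pi> (x mod p)"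
    using skew_pi_add_additive \<open>a < n\<close> by metis
  then show ?thesis
    by (simp add: t_def)
qed

lemma t_0: "t 0 = 0"
  by (simp add: t_def skew_pi_0)

definition C where "C y = (\<Sum>i<k. t ((\<phi> ^^ i) y))"

lemma t_funpow_periodic:
  assumes "y < n"
  shows "t ((\<phi> ^^ (i + k)) y) = t ((\<phi> ^^ i) y)"
proof -
  have "(\<phi> ^^ (i + k)) y mod p = (u ^ i * u ^ k * y) mod p"
    using funpow_mod_p[OF assms] by (simp add: power_add)
  also have "\<dots> = (u ^ i * y) mod p"
    using cong_scalar_right[OF cong_scalar_left[OF power_u_k, of "u ^ i"], of y] by (simp add: cong_def)
  also have "\<dots> = (\<phi> ^^ i) y mod p"
    using funpow_mod_p[OF assms] by simp
  finally show ?thesis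
    using t_mod_p funpow_less assms by metis
qed

lemma sum_skew_pi_funpow:
  assumes "x < n" "y < n"
  shows "(\<Sum>i<\<pi> x. \<pi> ((\<phi> ^^ i) y)) = \<pi> x + k * (t y + t x * C y)"
proof -
  have "(\<Sum>i<\<pi> x. \<pi> ((\<phi> ^^ i) y)) = (\<Sum>i<\<pi> x. 1 + k * t ((\<phi> ^^ i) y))"
    using skew_pi_eq_t funpow_less assms(2) by (intro sum.cong) auto
  also have "\<dots> = (\<Sum>i<\<pi> x. 1) + (\<Sum>i<\<pi> x. k * t ((\<phi> ^^ i) y))"
    by (rule sum.distrib)
  also have "\<dots> = \<pi> x + k * (\<Sum>i<\<pi> x. t ((\<phi> ^^ i) y))"
    by (simp add: sum_distrib_left)
  also have "(\<Sum>i<\<pi> x. t ((\<phi> ^^ i) y)) = (\<Sum>i<k * t x. t ((\<phi> ^^ i) y)) + t ((\<phi> ^^ (k * t x)) y)"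
    using skew_pi_eq_t[OF assms(1)] by simp
  also have "(\<Sum>i<k * t x. t ((\<phi> ^^ i) y)) = t x * C y"
    using sum_lessThan_periodic[of "\<lambda>i. t ((\<phi> ^^ i) y)" k "t x"] t_funpow_periodic[OF assms(2)]
    by (simp add: C_def)
  also have "t ((\<phi> ^^ (k * t x)) y) = t y"
  proof -
    have "t ((\<phi> ^^ (k * j)) y) = t y" for j
    proof (induction j)
      case (Suc j)
      then show ?case
        using t_funpow_periodic[OF assms(2), of "k * j"] by (simp add: add.commute)
    qed simp
    then show ?thesis .
  qed
  finally show ?thesis
    by (simp add: algebra_simps)
qed

lemma t_add_cong:
  assumes "x < n" "y < n"
  shows "t ((x + y) mod n) mod p = (t x + t y + t x * C y) mod p"
proof -
  define B where "B = t x + t y + t x * C y"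
  have xy: "(x + y) mod n < n"
    using n_pos by simp
  have "1 + k * t ((x + y) mod n) = (\<Sum>i<\<pi> x. \<pi> ((\<phi> ^^ i) y)) mod M"
    using skew_pi_eq_mod_order[OF xy not_identity power_at_add[OF assms]] skew_pi_eq_t[OF xy] by simp
  also have "\<dots> = (1 + k * B) mod (k * p)"
    unfolding sum_skew_pi_funpow[OF assms] order_eq B_def using skew_pi_eq_t[OF assms(1)]
    by (simp add: algebra_simps)
  finally have "[1 + k * t ((x + y) mod n) = 1 + k * B] (mod k * p)"
    by (simp add: cong_def)
  then have "[k * t ((x + y) mod n) = k * B] (mod k * p)"
    by (rule cong_add_lcancel_nat[THEN iffD1])
  then have "k * (t ((x + y) mod n) mod p) = k * (B mod p)"
    by (simp add: cong_def mod_mult_mult1)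
  then show ?thesis
    using k_pos by (simp add: B_def)
qed

lemma not_all_t_0: "\<not> (\<forall>x<n. t x = 0)"
proof
  assume "\<forall>x<n. t x = 0"
  then have "additive_at n \<phi> x" if "x < n" for x
    using additive_at_if_skew_pi_eq_1[OF that] skew_pi_eq_t[OF that] that by simp
  then show False
    using not_automorphism by blast
qed

text \<open>Iterating t_add_cong gives t(j x) \<equiv> t(x) (1 + (1 + C x) + ... + (1 + C x)^(j-1)) (mod p). For j = p
  the left side vanishes, while by Fermat the geometric sum is 1 when p does not divide C x.\<close>
lemma t_eq_0_if_orbit_sum_not_0:
  assumes "x < n" "C x mod p \<noteq> 0"
  shows "t x = 0"
proof -
  define G where "G j = (\<Sum>i<j. (1 + C x) ^ i)" for j
  have G_Suc: "G (Suc j) = 1 + (1 + C x) * G j" for j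
    unfolding G_def by (simp only: sum.lessThan_Suc_shift) (simp add: sum_distrib_left)
  have multiple: "[t ((j * x) mod n) = t x * G j] (mod p)" for j
  proof (induction j)
    case (Suc j)
    have "(Suc j * x) mod n = ((j * x) mod n + x) mod n"
      by (metis mod_add_left_eq add.commute mult_Suc)
    then have "[t ((Suc j * x) mod n) = t ((j * x) mod n) + t x + t ((j * x) mod n) * C x] (mod p)"
      using t_add_cong[OF _ assms(1), of "(j * x) mod n"] n_pos by (simp add: cong_def)
    also have "[t ((j * x) mod n) + t x + t ((j * x) mod n) * C x = t x * G j + t x + t x * G j * C x] (mod p)"
      by (intro cong_add cong_mult cong_refl Suc)
    also have "t x * G j + t x + t x * G j * C x = t x * G (Suc j)"
      by (simp add: G_Suc algebra_simps)
    finally show ?case .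
  qed (simp add: G_def t_0)
  have "t ((p * x) mod n) = t 0"
    using t_mod_p[of "(p * x) mod n"] n_pos by (simp add: mod_n_mod_p)
  then have "[t x * G p = 0] (mod p)"
    using multiple[of p] t_0 by (simp add: cong_sym)
  moreover have "[G p = 1] (mod p)"
    unfolding G_def using geometric_sum_prime_cong_1 prime assms(2) by (simp add: dvd_eq_mod_eq_0)
  ultimately have "t x mod p = 0"
    using cong_scalar_left[of "G p" 1 p "t x"] by (simp add: cong_def)
  then show ?thesis
    using t_less[OF assms(1)] by simp
qed

lemma t_mult_orbit_sum_sym:
  assumes "x < n" "y < n"
  shows "(t x * C y) mod p = (t y * C x) mod p"
proof -
  have "[t x + t y + t x * C y = t x + t y + t y * C x] (mod p)"
    using t_add_cong[OF assms] t_add_cong[OF assms(2,1)] by (simp add: cong_def add.commute)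
  then have "[t x * C y = t y * C x] (mod p)"
    by (simp add: add.assoc cong_add_lcancel_nat)
  then show ?thesis
    by (simp add: cong_def)
qed

lemma orbit_sum_cong_0:
  assumes "y < n"
  shows "C y mod p = 0"
proof (rule ccontr)
  assume C: "C y mod p \<noteq> 0"
  have "t x = 0" if "x < n" for x
  proof -
    have "(t x * C y) mod p = 0"
      using t_mult_orbit_sum_sym[OF that assms] t_eq_0_if_orbit_sum_not_0[OF assms C] by simp
    then have "p dvd t x * C y"
      by (simp add: dvd_eq_mod_eq_0)
    moreover have "\<not> p dvd C y"
      using C by (simp add: dvd_eq_mod_eq_0)
    ultimately have "p dvd t x"
      using prime prime_dvd_mult_nat by blast
    then show ?thesis
      using t_less[OF that] by (auto dest: dvd_imp_le)
  qed
  then show False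
    using not_all_t_0 by blast
qed

lemma t_add:
  assumes "x < n" "y < n"
  shows "t ((x + y) mod n) mod p = (t x + t y) mod p"
proof -
  have "(t x * C y) mod p = 0"
    using orbit_sum_cong_0[OF assms(2)] by (metis mod_mult_right_eq mult_0_right mod_0)
  then show ?thesis
    using t_add_cong[OF assms] by (metis mod_add_right_eq add_0_right)
qed

definition s where "s = t 1"

lemma t_linear: "x < n \<Longrightarrow> t x = (x * s) mod p"
proof (induction x)
  case (Suc x)
  then have "t (Suc x) mod p = (t x + t 1) mod p"
    using t_add[of x 1] one_less_n by simp
  also have "\<dots> = (x * s + s) mod p"
    using Suc by (simp add: s_def mod_add_left_eq)
  finally show ?case
    using t_less[OF Suc.prems] by (simp add: add.commute)
qed (simp add: t_0)

lemma s_pos: "0 < s"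
  and s_less: "s < p"
proof -
  show "s < p"
    using t_less[OF one_less_n] by (simp add: s_def)
  show "0 < s"
    using not_all_t_0 t_linear by (metis mult_0_right mod_0 neq0_conv)
qed

lemma k_ge_2: "2 \<le> k"
proof (rule ccontr)
  assume "\<not> 2 \<le> k"
  then have "k = 1"
    using k_pos by simp
  then have "t x = 0" if "x < n" for x
    using orbit_sum_cong_0[OF that] t_less[OF that] by (simp add: C_def)
  then show False
    using not_all_t_0 by blast
qed

lemma derived_eq_model: "Defs.derived n \<phi> = model_skew p k u s"
proof
  fix a
  have pi: "\<pi> ((\<phi> ^^ i) 1) = 1 + k * ((u ^ i * s) mod p)" for i
  proof -
    have "((\<phi> ^^ i) 1 * s) mod p = (((\<phi> ^^ i) 1 mod p) * s) mod p"
      by (simp add: mod_mult_left_eq)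
    also have "\<dots> = (u ^ i * s) mod p"
      using funpow_mod_p[OF one_less_n] by (simp add: mod_mult_left_eq)
    finally show ?thesis
      using skew_pi_eq_t t_linear funpow_less[OF one_less_n] by simp
  qed
  have "(\<Sum>i<a. \<pi> ((\<phi> ^^ i) 1)) = (\<Sum>i<a. 1 + k * ((u ^ i * s) mod p))"
    by (simp only: pi)
  also have "\<dots> = (\<Sum>i<a. 1) + (\<Sum>i<a. k * ((u ^ i * s) mod p))"
    by (rule sum.distrib)
  also have "\<dots> = a + k * twisted_sum p u s a"
    by (simp add: twisted_sum_def sum_distrib_left)
  finally show "Defs.derived n \<phi> a = model_skew p k u s a"
    using one_less_n p_ge_2 by (simp add: Defs.derived_def skew_sigma_def order_eq model_skew_def)
qed

lemma has_complexity_3: "has_complexity n \<phi> 3"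
proof -
  interpret model: model_skew_params p k u s
    using prime coprime_u k_def k_ge_2 s_pos s_less by unfold_locales auto
  show ?thesis
    using has_complexity_Suc[OF _ _ model.has_complexity_model] one_less_n
    by (simp add: derive_step_def order_eq derived_eq_model numeral_3_eq_3 numeral_2_eq_2)
qed

end

lemma complexity_prime_square:
  assumes "prime p" "skew_morphism (p ^ 2) \<phi>"
  shows "complexity (p ^ 2) \<phi> \<in> {0, 1, 3}"
proof -
  interpret skew_Zn "p ^ 2" \<phi>
    by unfold_locales (rule assms(2))
  have "2 * 1 \<le> p * p"
    using prime_ge_2_nat[OF assms(1)] by (intro mult_le_mono) auto
  then have "2 \<le> p ^ 2"
    by (simp add: power2_eq_square)
  show ?thesis
  proof (cases "\<forall>a<p ^ 2. additive_at (p ^ 2) \<phi> a")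
    case True
    then show ?thesis
      using complexity_eqI[OF has_complexity_automorphism[OF \<open>2 \<le> p ^ 2\<close> True]] by simp
  next
    case False
    interpret skew_prime_square "p ^ 2" \<phi> p
      by unfold_locales (use assms(1) False in auto)
    show ?thesis
      using complexity_eqI[OF has_complexity_3] by simp
  qed
qed

section \<open>A skew morphism of complexity 3\<close>

definition example_poly :: "int \<Rightarrow> int \<Rightarrow> int" where
  "example_poly P x = x * (P * x + P - 1)"

definition example_skew :: "nat \<Rightarrow> nat \<Rightarrow> nat" where
  "example_skew p x = nat (example_poly (int p) (int x) mod (int p) ^ 2)"

lemma example_poly_cong: "[x = y] (mod m) \<Longrightarrow> [example_poly P x = example_poly P y] (mod m)"
  unfolding example_poly_def by (intro cong_mult cong_diff cong_add cong_refl cong_scalar_left) auto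

lemma example_poly_twice:
  "example_poly P (example_poly P x)
     = (1 - 2 * P) * x + P ^ 2 * (x * (x + 1) * (1 - 2 * x) + P * (x * (x + 1)) ^ 2)"
  unfolding example_poly_def by (simp add: algebra_simps power2_eq_square)

lemma example_poly_add:
  "example_poly P (a + b)
     = example_poly P a + (1 - 2 * a * P) * example_poly P b + P ^ 2 * (2 * a * (b ^ 2 + b))"
  unfolding example_poly_def by (simp add: algebra_simps power2_eq_square)

locale square_example =
  fixes p :: nat
  assumes three_le_p: "3 \<le> p"
begin

abbreviation "N \<equiv> (int p) ^ 2"
abbreviation "f \<equiv> example_skew p"
abbreviation "F \<equiv> example_poly (int p)"

lemma example_skew_less: "f x < p ^ 2"
proof -
  have "int (f x) < N"
    using three_le_p by (simp add: example_skew_def)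
  then show ?thesis
    by (metis of_nat_less_iff of_nat_power)
qed

lemma example_skew_cong: "[int (f x) = F (int x)] (mod N)"
  using three_le_p by (simp add: example_skew_def cong_def)

lemma example_skew_eq_iff:
  assumes "x < p ^ 2" "y < p ^ 2"
  shows "x = y \<longleftrightarrow> [int x = int y] (mod N)"
proof -
  have "N = int (p ^ 2)"
    by simp
  then show ?thesis
    using assms cong_int_iff[of x y "p ^ 2"] cong_less_modulus_unique_nat[of x y "p ^ 2"] by auto
qed

lemma example_skew_twice: "[int (f (f x)) = (1 - 2 * int p) * int x] (mod N)"
proof -
  have "[int (f (f x)) = F (F (int x))] (mod N)"
    using cong_trans[OF example_skew_cong example_poly_cong[OF example_skew_cong]] .
  moreover have "[F (F (int x)) = (1 - 2 * int p) * int x] (mod N)"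
    unfolding example_poly_twice by (simp add: cong_def)
  ultimately show ?thesis
    by (rule cong_trans)
qed

lemma funpow_example_even: "[int ((f ^^ (2 * j)) x) = (1 - 2 * int j * int p) * int x] (mod N)"
proof (induction j arbitrary: x)
  case (Suc j)
  let ?c = "1 - 2 * int j * int p"
  have "(f ^^ (2 * Suc j)) x = (f ^^ (2 * j)) (f (f x))"
    by (simp add: funpow_add_apply[symmetric] numeral_2_eq_2 funpow_swap1)
  then have "[int ((f ^^ (2 * Suc j)) x) = ?c * ((1 - 2 * int p) * int x)] (mod N)"
    using cong_trans[OF Suc.IH cong_scalar_left[OF example_skew_twice]] by simp
  moreover have "?c * ((1 - 2 * int p) * int x) = (1 - 2 * int (Suc j) * int p) * int x + N * (4 * int j * int x)"
    by (simp add: algebra_simps power2_eq_square)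
  ultimately show ?case
    by (simp add: cong_def)
qed simp

lemma funpow_example_odd: "[int ((f ^^ (1 + 2 * a)) b) = (1 - 2 * int a * int p) * F (int b)] (mod N)"
proof -
  have "(f ^^ (1 + 2 * a)) b = (f ^^ (2 * a)) (f b)"
    by (simp add: funpow_swap1)
  then show ?thesis
    using cong_trans[OF funpow_example_even cong_scalar_left[OF example_skew_cong]] by simp
qed

text \<open>(1 + 2p)(1 - 2p) \<equiv> 1 (mod p^2), so f \<circ> f is invertible.\<close>

lemma inj_on_example: "inj_on f {0..<p ^ 2}"
proof (rule inj_onI)
  fix x y
  assume "x \<in> {0..<p ^ 2}" "y \<in> {0..<p ^ 2}" "f x = f y"
  have inverse: "(1 + 2 * int p) * ((1 - 2 * int p) * z) = z + N * (- 4 * z)" for z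
    by (simp add: algebra_simps power2_eq_square)
  have "[(1 - 2 * int p) * int x = int (f (f x))] (mod N)"
    by (rule cong_sym[OF example_skew_twice])
  also have "int (f (f x)) = int (f (f y))"
    using \<open>f x = f y\<close> by simp
  also have "[\<dots> = (1 - 2 * int p) * int y] (mod N)"
    by (rule example_skew_twice)
  finally have "[(1 + 2 * int p) * ((1 - 2 * int p) * int x) = (1 + 2 * int p) * ((1 - 2 * int p) * int y)] (mod N)"
    by (rule cong_scalar_left)
  then have "[int x + N * (- 4 * int x) = int y + N * (- 4 * int y)] (mod N)"
    by (simp only: inverse)
  moreover have "[z + N * w = z] (mod N)" for z w :: int
    by (simp add: cong_iff_dvd_diff)
  ultimately have "[int x = int y] (mod N)"
    by (meson cong_sym cong_trans)
  then show "x = y"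
    using example_skew_eq_iff \<open>x \<in> {0..<p ^ 2}\<close> \<open>y \<in> {0..<p ^ 2}\<close> by simp
qed

lemma power_at_example: "power_at (p ^ 2) f a (1 + 2 * a)"
  unfolding power_at_def
proof (intro allI impI)
  fix b
  have "[int (f ((a + b) mod p ^ 2)) = F (int a + int b)] (mod N)"
    using cong_trans[OF example_skew_cong example_poly_cong] by (simp add: cong_def zmod_int)
  also have "[F (int a + int b) = F (int a) + (1 - 2 * int a * int p) * F (int b)] (mod N)"
    unfolding example_poly_add by (simp add: cong_def)
  also have "[F (int a) + (1 - 2 * int a * int p) * F (int b) = int (f a) + int ((f ^^ (1 + 2 * a)) b)] (mod N)"
    using cong_add[OF example_skew_cong funpow_example_odd] by (simp add: cong_sym)
  also have "[int (f a) + int ((f ^^ (1 + 2 * a)) b) = int ((f a + (f ^^ (1 + 2 * a)) b) mod p ^ 2)] (mod N)"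
    by (simp add: cong_def zmod_int)
  finally show "f ((a + b) mod p ^ 2) = (f a + (f ^^ (1 + 2 * a)) b) mod p ^ 2"
    using example_skew_eq_iff example_skew_less three_le_p by simp
qed

lemma skew_morphism_example: "skew_morphism (p ^ 2) f"
  using three_le_p inj_on_example example_skew_less power_at_example
  by (intro skew_morphismI) (auto simp: example_skew_def example_poly_def)

lemma example_not_automorphism: "\<not> (\<forall>a<p ^ 2. additive_at (p ^ 2) f a)"
proof
  assume all: "\<forall>a<p ^ 2. additive_at (p ^ 2) f a"
  have "3 * 3 \<le> p * p"
    using three_le_p by (intro mult_le_mono)
  then have "2 < p ^ 2"
    by (simp add: power2_eq_square)
  then have "additive_at (p ^ 2) f 1"
    using all by simp
  then have "f 2 = (f 1 + f 1) mod p ^ 2"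
    using \<open>2 < p ^ 2\<close> unfolding additive_at_def by (metis one_add_one less_trans one_less_numeral_iff semiring_norm(76) mod_less)
  have "[F 2 = int (f 2)] (mod N)"
    using example_skew_cong[of 2] by (simp add: cong_sym)
  also have "int (f 2) = int ((f 1 + f 1) mod p ^ 2)"
    using \<open>f 2 = (f 1 + f 1) mod p ^ 2\<close> by simp
  also have "[\<dots> = int (f 1) + int (f 1)] (mod N)"
    by (simp add: cong_def zmod_int)
  also have "[int (f 1) + int (f 1) = F 1 + F 1] (mod N)"
    using cong_add[OF example_skew_cong[of 1] example_skew_cong[of 1]] by simp
  finally have "[F 1 + F 1 + 2 * int p = F 1 + F 1 + 0] (mod N)"
    by (simp add: example_poly_def algebra_simps)
  then have "[2 * int p = 0] (mod N)"
    using cong_add_lcancel by blast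
  then have "int p * int p dvd int p * 2"
    by (simp add: cong_0_iff power2_eq_square mult.commute)
  then have "int p dvd 2"
    using three_le_p by simp
  then show False
    using three_le_p zdvd_imp_le by fastforce
qed

end

lemma has_complexity_example:
  assumes "prime p" "3 \<le> p"
  shows "has_complexity (p ^ 2) (example_skew p) 3"
proof -
  interpret square_example p
    by unfold_locales (rule assms(2))
  interpret skew_prime_square "p ^ 2" "example_skew p" p
    using skew_morphism_example example_not_automorphism assms(1) by unfold_locales auto
  show ?thesis
    by (rule has_complexity_3)
qed

theorem proposition6p1:
  fixes p :: nat
  assumes "prime p" and "odd p"
  shows "Comp (p ^ 2) = {0, 1, 3}"
proof
  show "Comp (p ^ 2) \<subseteq> {0, 1, 3}"
    using complexity_prime_square[OF assms(1)] unfolding Comp_def by fastforce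
next
  have "3 \<le> p"
    using prime_ge_2_nat[OF assms(1)] assms(2) by (cases "p = 2") auto
  then have "3 * 3 \<le> p * p"
    by (intro mult_le_mono)
  then have "2 < p ^ 2"
    by (simp add: power2_eq_square)
  have "coprime 2 (p ^ 2)"
    using assms(2) by (simp add: coprime_left_2_iff_odd)
  have "0 \<in> Comp (p ^ 2)"
    using has_complexity_in_Comp[OF skew_morphism_mult_map has_complexity_mult_map, of "p ^ 2" 1]
      \<open>2 < p ^ 2\<close> \<open>3 \<le> p\<close> by simp
  moreover have "1 \<in> Comp (p ^ 2)"
    using has_complexity_in_Comp[OF skew_morphism_mult_map has_complexity_mult_map, of "p ^ 2" 2]
      \<open>2 < p ^ 2\<close> \<open>coprime 2 (p ^ 2)\<close> by simp
  moreover have "3 \<in> Comp (p ^ 2)"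
    using has_complexity_in_Comp[OF square_example.skew_morphism_example has_complexity_example]
      assms(1) \<open>3 \<le> p\<close> square_example.intro by blast
  ultimately show "{0, 1, 3} \<subseteq> Comp (p ^ 2)"
    by blast
qed

end
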